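(* Let $X=(u_1,u_2)$ be the mild solution of the stochastic wave equation on $\mathbb{S}^2$ with deterministic initial values $(v_1,v_2)$ (as defined in the context). Assume there exist $\ell_0\in\mathbb{N}$, $\alpha>2$ and $C>0$ with $A_\ell\le C\ell^{-\alpha}$ for all $\ell>\ell_0$. Then: (i) for all $t\in[0,T]$, $m\in\mathbb{N}$ and $s<\alpha/2$ with $v_1\in H^s(\mathbb{S}^2)$ and $v_2\in H^{s-1}(\mathbb{S}^2)$, one has $u_1(t)\in L^{2m}(\Omega;H^s(\mathbb{S}^2))$, i.e. there exists a constant $M$ such that $\|u_1(t)\|_{L^{2m}(\Omega;H^s(\mathbb{S}^2))}\le M(1+\|v_1\|_{H^s(\mathbb{S}^2)}+\|v_2\|_{H^{s-1}(\mathbb{S}^2)})<\infty$; (ii) for all $t\in[0,T]$, $m\in\mathbb{N}$ and $s<\alpha/2-1$ with $v_1\in H^{s+1}(\mathbb{S}^2)$ and $v_2\in H^{s}(\mathbb{S}^2)$, one has $u_2(t)\in L^{2m}(\Omega;H^s(\mathbb{S}^2))$, i.e. there exists a constant $M$ such that $\|u_2(t)\|_{L^{2m}(\Omega;H^s(\mathbb{S}^2))}\le M(1+\|v_1\|_{H^{s+1}(\mathbb{S}^2)}+\|v_2\|_{H^{s}(\mathbb{S}^2)})<\infty$.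
   Context: $\mathbb{S}^2$ is the unit sphere in $\mathbb{R}^3$, $L^2(\mathbb{S}^2)$ the real square-integrable functions, $(Y_{\ell,m},\ \ell\in\mathbb{N}_0,\ |m|\le\ell)$ the standard complex spherical harmonics (orthonormal basis, $Y_{\ell,-m}=(-1)^m\overline{Y_{\ell,m}}$, $\Delta_{\mathbb{S}^2}Y_{\ell,m}=-\ell(\ell+1)Y_{\ell,m}$). For $s\in\mathbb{R}$, $H^s(\mathbb{S}^2)=(\mathrm{Id}-\Delta_{\mathbb{S}^2})^{-s/2}L^2(\mathbb{S}^2)$ with norm $\|f\|_{H^s}=\|(\mathrm{Id}-\Delta_{\mathbb{S}^2})^{s/2}f\|_{L^2}$, i.e. $\|f\|_{H^s}^2=\sum_{\ell,m}(1+\ell(\ell+1))^s|f^{\ell,m}|^2$ with $f^{\ell,m}=(f,Y_{\ell,m})$. $\|Z\|_{L^p(\Omega;H^s)}=\mathbb{E}[\|Z\|_{H^s}^p]^{1/p}$. The noise: $W(t)=\sum_{\ell}\big(\sqrt{A_\ell}\beta_1^{\ell,0}(t)Y_{\ell,0}+\sqrt{2A_\ell}\sum_{m=1}^\ell(\beta_1^{\ell,m}(t)\Re Y_{\ell,m}+\beta_2^{\ell,m}(t)\Im Y_{\ell,m})\big)$, $t\in[0,T]$, with independent real standard Brownian motions $\beta_i^{\ell,m}$ ($\beta_2^{\ell,0}=0$) and angular power spectrum $A_\ell\ge0$; $a^{\ell,m}(t)=(W(t),Y_{\ell,m})$. The stochastic wave equation is $\partial_{tt}u-\Delta_{\mathbb{S}^2}u=\dot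 W$, $u(0)=v_1$, $\partial_tu(0)=v_2$, with $v_1,v_2$ deterministic; its mild solution $X=(u_1,u_2)$, $u_2=\partial_tu_1$, is $u_j(t)=\sum_{\ell,m}u_j^{\ell,m}(t)Y_{\ell,m}$ where, with $\lambda_\ell=\ell(\ell+1)$ and $v_j^{\ell,m}=(v_j,Y_{\ell,m})$: for $\ell\ge1$, $u_1^{\ell,m}(t)=\cos(t\lambda_\ell^{1/2})v_1^{\ell,m}+\lambda_\ell^{-1/2}\sin(t\lambda_\ell^{1/2})v_2^{\ell,m}+\int_0^t\lambda_\ell^{-1/2}\sin((t-s)\lambda_\ell^{1/2})\,\mathrm{d}a^{\ell,m}(s)$ and $u_2^{\ell,m}(t)=-\lambda_\ell^{1/2}\sin(t\lambda_\ell^{1/2})v_1^{\ell,m}+\cos(t\lambda_\ell^{1/2})v_2^{\ell,m}+\int_0^t\cos((t-s)\lambda_\ell^{1/2})\,\mathrm{d}a^{\ell,m}(s)$; for $\ell=0$, $u_1^{0,0}(t)=v_1^{0,0}+tv_2^{0,0}+\int_0^ta^{0,0}(s)\,\mathrm{d}s$ and $u_2^{0,0}(t)=v_2^{0,0}+a^{0,0}(t)$. *)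

theory Defs
  imports "HOL-Probability.Probability"
begin

text \<open>Elements of L2(S2) / H^s(S2) (real-valued functions or distributions on the sphere)
  are represented by their spherical harmonic coefficients f l m = (f, Y_{l,m}),
  with l :: nat and m :: int, |m| <= l.\<close>

definition lam :: "nat \<Rightarrow> real" where
  "lam l = real l * (real l + 1)"

text \<open>Coefficient families of real-valued functions: supported on |m| <= l and
  satisfying f^{l,-m} = (-1)^m conj(f^{l,m}).\<close>
definition real_sph_coeffs :: "(nat \<Rightarrow> int \<Rightarrow> complex) \<Rightarrow> bool" where
  "real_sph_coeffs f \<longleftrightarrow>
     (\<forall>l m. int l < \<bar>m\<bar> \<longrightarrow> f l m = 0) \<and>
     (\<forall>l m. f l (- m) = (-1) ^ nat \<bar>m\<bar> * cnj (f l m))"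

text \<open>Squared Sobolev norm ||f||_{H^s}^2 = sum_{l,m} (1 + l(l+1))^s |f^{l,m}|^2,
  taken in ennreal (value infinity means f is not in H^s).\<close>
definition hs_sq :: "real \<Rightarrow> (nat \<Rightarrow> int \<Rightarrow> complex) \<Rightarrow> ennreal" where
  "hs_sq s f = (\<Sum>l. \<Sum>m\<in>{- int l..int l}. ennreal ((1 + lam l) powr s * (cmod (f l m))\<^sup>2))"

definition hs_norm :: "real \<Rightarrow> (nat \<Rightarrow> int \<Rightarrow> complex) \<Rightarrow> real" where
  "hs_norm s f = sqrt (enn2real (hs_sq s f))"

definition std_BM :: "'a measure \<Rightarrow> real \<Rightarrow> (real \<Rightarrow> 'a \<Rightarrow> real) \<Rightarrow> bool" where
  "std_BM M T B \<longleftrightarrow>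
     (\<forall>\<omega>\<in>space M. B 0 \<omega> = 0 \<and> continuous_on {0..T} (\<lambda>t. B t \<omega>)) \<and>
     (\<forall>s t. 0 \<le> s \<and> s < t \<and> t \<le> T \<longrightarrow>
        distributed M lborel (\<lambda>\<omega>. B t \<omega> - B s \<omega>)
          (\<lambda>x. ennreal (normal_density 0 (sqrt (t - s)) x))) \<and>
     (\<forall>(n::nat) (\<tau>::nat \<Rightarrow> real). 0 \<le> \<tau> 0 \<and> \<tau> n \<le> T \<and> (\<forall>i<n. \<tau> i \<le> \<tau> (Suc i)) \<longrightarrow>
        prob_space.indep_vars M (\<lambda>_. borel) (\<lambda>i \<omega>. B (\<tau> (Suc i)) \<omega> - B (\<tau> i) \<omega>) {..<n})"

text \<open>Index set of the Brownian motions beta_i^{l,m}: i = 1 with 0 <= m <= l,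
  i = 2 with 1 <= m <= l (beta_2^{l,0} = 0 does not enter).\<close>
definition bm_index :: "(nat \<times> nat \<times> nat) set" where
  "bm_index = {(i, l, m). (i = 1 \<and> m \<le> l) \<or> (i = 2 \<and> 1 \<le> m \<and> m \<le> l)}"

definition noise_family :: "'a measure \<Rightarrow> real \<Rightarrow> (nat \<times> nat \<times> nat \<Rightarrow> real \<Rightarrow> 'a \<Rightarrow> real) \<Rightarrow> bool" where
  "noise_family M T \<beta> \<longleftrightarrow>
     (\<forall>k\<in>bm_index. std_BM M T (\<beta> k)) \<and>
     prob_space.indep_vars M (\<lambda>_. PiM {0..T} (\<lambda>_. (borel :: real measure)))
        (\<lambda>k \<omega>. restrict (\<lambda>t. \<beta> k t \<omega>) {0..T}) bm_index"

text \<open>a^{l,m}(t) = (W(t), Y_{l,m}), computed from the expansion of W using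
  Re Y_{l,m} = (Y_{l,m} + (-1)^m Y_{l,-m})/2, Im Y_{l,m} = (Y_{l,m} - (-1)^m Y_{l,-m})/(2i),
  and (f,g) = integral of f * conj g.\<close>
definition noise_coeff :: "(nat \<Rightarrow> real) \<Rightarrow> (nat \<times> nat \<times> nat \<Rightarrow> real \<Rightarrow> 'a \<Rightarrow> real)
    \<Rightarrow> nat \<Rightarrow> int \<Rightarrow> real \<Rightarrow> 'a \<Rightarrow> complex" where
  "noise_coeff A \<beta> l m t \<omega> =
     (if m = 0 then complex_of_real (sqrt (A l) * \<beta> (1, l, 0) t \<omega>)
      else if 0 < m then complex_of_real (sqrt (A l / 2))
             * Complex (\<beta> (1, l, nat m) t \<omega>) (- \<beta> (2, l, nat m) t \<omega>)
      else complex_of_real ((-1) ^ nat (- m) * sqrt (A l / 2))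
             * Complex (\<beta> (1, l, nat (- m)) t \<omega>) (\<beta> (2, l, nat (- m)) t \<omega>))"

text \<open>Stochastic (Wiener) integral int_0^t f(r) dX(r) of a deterministic C^1 integrand f
  against a continuous path X, defined pathwise as the Riemann-Stieltjes integral,
  i.e. via integration by parts.\<close>
definition det_stoch_int :: "(real \<Rightarrow> real) \<Rightarrow> (real \<Rightarrow> complex) \<Rightarrow> real \<Rightarrow> complex" where
  "det_stoch_int f X t =
     complex_of_real (f t) * X t - complex_of_real (f 0) * X 0
     - integral {0..t} (\<lambda>r. complex_of_real (deriv f r) * X r)"

definition sol_u1 :: "(nat \<Rightarrow> real) \<Rightarrow> (nat \<times> nat \<times> nat \<Rightarrow> real \<Rightarrow> 'a \<Rightarrow> real)
    \<Rightarrow> (nat \<Rightarrow> int \<Rightarrow> complex) \<Rightarrow> (nat \<Rightarrow> int \<Rightarrow> complex) \<Rightarrow> real \<Rightarrow> 'a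
    \<Rightarrow> nat \<Rightarrow> int \<Rightarrow> complex" where
  "sol_u1 A \<beta> v1 v2 t \<omega> l m =
     (if int l < \<bar>m\<bar> then 0
      else if l = 0 then
        v1 0 0 + complex_of_real t * v2 0 0 + integral {0..t} (\<lambda>r. noise_coeff A \<beta> 0 0 r \<omega>)
      else
        complex_of_real (cos (t * sqrt (lam l))) * v1 l m
        + complex_of_real (sin (t * sqrt (lam l)) / sqrt (lam l)) * v2 l m
        + det_stoch_int (\<lambda>r. sin ((t - r) * sqrt (lam l)) / sqrt (lam l))
            (\<lambda>r. noise_coeff A \<beta> l m r \<omega>) t)"

definition sol_u2 :: "(nat \<Rightarrow> real) \<Rightarrow> (nat \<times> nat \<times> nat \<Rightarrow> real \<Rightarrow> 'a \<Rightarrow> real)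
    \<Rightarrow> (nat \<Rightarrow> int \<Rightarrow> complex) \<Rightarrow> (nat \<Rightarrow> int \<Rightarrow> complex) \<Rightarrow> real \<Rightarrow> 'a
    \<Rightarrow> nat \<Rightarrow> int \<Rightarrow> complex" where
  "sol_u2 A \<beta> v1 v2 t \<omega> l m =
     (if int l < \<bar>m\<bar> then 0
      else if l = 0 then v2 0 0 + noise_coeff A \<beta> 0 0 t \<omega>
      else
        complex_of_real (- sqrt (lam l) * sin (t * sqrt (lam l))) * v1 l m
        + complex_of_real (cos (t * sqrt (lam l))) * v2 l m
        + det_stoch_int (\<lambda>r. cos ((t - r) * sqrt (lam l)))
            (\<lambda>r. noise_coeff A \<beta> l m r \<omega>) t)"

end

(* Every spherical-harmonic coefficient of u_j(t) is the coefficient of the free wave started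
   at (v1, v2) plus a Wiener integral, against the Brownian motions of the noise, of the kernel
   sin((t - r) sqrt(lam l)) / sqrt(lam l) (for u_1) or cos((t - r) sqrt(lam l)) (for u_2).
   The free part is controlled in H^s by the norms of v1 and v2.  A Wiener integral is the
   pathwise limit of Riemann-Stieltjes sums of independent Gaussian increments, so Fatou's lemma
   and the Gaussian moment formula bound its 2k-th moment by (2k)! (4 T G^2)^k when the kernel is
   bounded by G.  Jensen's inequality over |m| <= l and Minkowski's inequality in L^k over l then
   bound the k-th moment of the squared H^s norm of the stochastic part, provided
   sum_l (1 + lam l)^s A_l (2l + 1) G_l^2 < infinity; with A_l <= C l^(-alpha) this holds for
   s < alpha/2 when G_l ~ 1/l (u_1) and for s < alpha/2 - 1 when G_l = 1 (u_2). *)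

theory Submission
  imports Defs
begin

lemma power_add_le_two_power:
  fixes a b :: real
  assumes "0 \<le> a" "0 \<le> b"
  shows "(a + b) ^ k \<le> 2 ^ k * (a ^ k + b ^ k)"
proof -
  have "(a + b) ^ k \<le> (2 * max a b) ^ k" using assms by (intro power_mono) auto
  also have "\<dots> = 2 ^ k * max a b ^ k" by (simp add: power_mult_distrib)
  also have "max a b ^ k \<le> a ^ k + b ^ k" using assms by (auto simp: max_def)
  finally show ?thesis by simp
qed

lemma power_add_le_two_power_ennreal:
  fixes a b :: ennreal
  shows "(a + b) ^ k \<le> 2 ^ k * (a ^ k + b ^ k)"
proof (cases "k = 0")
  case True then show ?thesis by simp
next
  case False
  show ?thesis
  proof (cases "a = \<top> \<or> b = \<top>")
    case True
    have t: "a ^ k + b ^ k = \<top>" using True False by (auto simp: power_eq_top_ennreal)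
    have "(2::ennreal) ^ k \<noteq> 0" by simp
    then have "2 ^ k * (\<top>::ennreal) = \<top>" by (rule ennreal_top_mult_left)
    then show ?thesis unfolding t by simp
  next
    case nt: False
    then have na: "a \<noteq> \<top>" and nb: "b \<noteq> \<top>" by auto
    obtain x where x: "a = ennreal x" "0 \<le> x" using na by (cases a) auto
    obtain y where y: "b = ennreal y" "0 \<le> y" using nb by (cases b) auto
    have "(x + y) ^ k \<le> 2 ^ k * (x ^ k + y ^ k)" by (rule power_add_le_two_power[OF x(2) y(2)])
    then have "ennreal ((x + y) ^ k) \<le> ennreal (2 ^ k * (x ^ k + y ^ k))" by (rule ennreal_leI)
    moreover have "(a + b) ^ k = ennreal ((x + y) ^ k)" using x y
      by (simp add: ennreal_power[symmetric] ennreal_plus[symmetric] del: ennreal_plus)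
    moreover have "2 ^ k * (a ^ k + b ^ k) = ennreal (2 ^ k * (x ^ k + y ^ k))"
    proof -
      have e2: "ennreal (2 ^ k) = 2 ^ k" by (simp add: ennreal_power[symmetric])
      show ?thesis using x y by (simp add: ennreal_power ennreal_mult e2)
    qed
    ultimately show ?thesis by simp
  qed
qed

lemma add_power_le_power_add:
  fixes a b :: real
  assumes a: "0 \<le> a" and b: "0 \<le> b" and k: "1 \<le> k"
  shows "a ^ k + b ^ k \<le> (a + b) ^ k"
proof -
  have "a ^ Suc n + b ^ Suc n \<le> (a + b) ^ Suc n" for n
  proof (induction n)
    case 0 then show ?case by simp
  next
    case (Suc n)
    have "a ^ Suc (Suc n) + b ^ Suc (Suc n) \<le> (a + b) * (a ^ Suc n + b ^ Suc n)"
      using a b by (simp add: algebra_simps)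
    also have "\<dots> \<le> (a + b) * (a + b) ^ Suc n"
      using Suc a b by (intro mult_left_mono) auto
    finally show ?case by simp
  qed
  moreover obtain n where "k = Suc n" using k by (cases k) auto
  ultimately show ?thesis by blast
qed

lemma cmod_add_squared_le: "(cmod (a + b))\<^sup>2 \<le> 2 * (cmod a)\<^sup>2 + 2 * (cmod b)\<^sup>2"
proof -
  have "cmod (a + b) \<le> cmod a + cmod b" by (rule norm_triangle_ineq)
  then have "(cmod (a + b))\<^sup>2 \<le> (cmod a + cmod b)\<^sup>2" by (intro power_mono) auto
  also have "\<dots> \<le> 2 * (cmod a)\<^sup>2 + 2 * (cmod b)\<^sup>2"
  proof -
    have h: "0 \<le> (cmod a - cmod b)\<^sup>2" by simp
    show ?thesis using h by (auto simp: power2_eq_square algebra_simps)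
  qed
  finally show ?thesis .
qed

lemma cmod_of_real_combination_squared_le:
  "(cmod (complex_of_real p * a + complex_of_real q * b))\<^sup>2
      \<le> 2 * p\<^sup>2 * (cmod a)\<^sup>2 + 2 * q\<^sup>2 * (cmod b)\<^sup>2"
  using cmod_add_squared_le[of "complex_of_real p * a" "complex_of_real q * b"]
  by (simp add: norm_mult power_mult_distrib)

lemma sum_power_le_weighted:
  fixes Q p :: "'i \<Rightarrow> real"
  assumes fin: "finite F" and p: "\<And>l. l \<in> F \<Longrightarrow> 0 < p l" and Q: "\<And>l. l \<in> F \<Longrightarrow> 0 \<le> Q l"
    and k: "1 \<le> k"
  shows "(\<Sum>l\<in>F. Q l) ^ k \<le> (\<Sum>l\<in>F. p l) ^ (k - 1) * (\<Sum>l\<in>F. Q l ^ k / p l ^ (k - 1))"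
proof (cases "F = {}")
  case True then show ?thesis using k by (simp add: power_0_left)
next
  case False
  have power_convex: "convex_on {0::real..} (\<lambda>x. x ^ k)"
  proof (cases "even k")
    case True
    then show ?thesis using convex_on_subset[OF convex_power_even[OF True]] by blast
  next
    case False
    then show ?thesis using convex_power_odd by blast
  qed
  define P where "P = (\<Sum>l\<in>F. p l)"
  have Ppos: "0 < P" unfolding P_def using fin False p by (intro sum_pos) auto
  define a where "a l = p l / P" for l
  define y where "y l = Q l * P / p l" for l
  have a1: "(\<Sum>l\<in>F. a l) = 1" unfolding a_def P_def using Ppos[unfolded P_def]
    by (simp add: sum_divide_distrib[symmetric])
  have ay: "a l *\<^sub>R y l = Q l" if "l \<in> F" for l using p[OF that] Ppos by (simp add: a_def y_def)
  have J: "(\<lambda>x. x ^ k) (\<Sum>l\<in>F. a l *\<^sub>R y l) \<le> (\<Sum>l\<in>F. a l * (\<lambda>x. x ^ k) (y l))"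
    by (rule convex_on_sum[OF fin False power_convex a1])
       (use p[THEN less_imp_le] Q Ppos[THEN less_imp_le] in
           \<open>auto simp: a_def y_def intro!: divide_nonneg_nonneg mult_nonneg_nonneg\<close>)
  have "(\<Sum>l\<in>F. a l *\<^sub>R y l) = (\<Sum>l\<in>F. Q l)" using ay by (intro sum.cong) auto
  moreover have "a l * (y l) ^ k = P ^ (k - 1) * (Q l ^ k / p l ^ (k - 1))" if "l \<in> F" for l
  proof -
    obtain k' where kk: "k = Suc k'" using k by (cases k) auto
    show ?thesis using p[OF that] Ppos unfolding kk a_def y_def
      by (simp add: power_mult_distrib power_divide field_simps)
  qed
  ultimately have "(\<Sum>l\<in>F. Q l) ^ k \<le> (\<Sum>l\<in>F. P ^ (k - 1) * (Q l ^ k / p l ^ (k - 1)))"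
    using J by (metis (no_types, lifting) sum.cong)
  then show ?thesis by (simp add: P_def sum_distrib_left)
qed

lemma two_power_fact_le_power:
  fixes T x :: real
  assumes T: "0 \<le> T" and x: "0 \<le> x" and k: "1 \<le> k"
  shows "2 ^ (k+1) * fact (2*k) * (4 * T * x) ^ k \<le> (16 * T * max 1 (fact (2*k)) * x) ^ k"
proof -
  have "2 ^ (k+1) * fact (2*k) * (4 * T * x) ^ k
      \<le> (4 ^ k * max 1 (fact (2*k)) ^ k) * (4 * T * x) ^ k"
  proof (intro mult_right_mono mult_mono)
    have "(2::real) ^ (k + 1) \<le> 2 ^ (2 * k)" using k by (intro power_increasing) auto
    then show "(2::real) ^ (k + 1) \<le> 4 ^ k" by (simp add: power_mult)
    have "fact (2*k) \<le> max 1 (fact (2*k) :: real)" by simp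
    also have "\<dots> \<le> max 1 (fact (2*k)) ^ k" using k by (intro self_le_power) auto
    finally show "(fact (2*k) :: real) \<le> max 1 (fact (2*k)) ^ k" .
  qed (use T x in auto)
  also have "\<dots> = (16 * T * max 1 (fact (2*k)) * x) ^ k"
  proof -
    have "16 * T * max 1 (fact (2*k)) * x = 4 * max 1 (fact (2*k)) * (4 * T * x)"
      by (simp add: algebra_simps)
    then show ?thesis by (simp only: power_mult_distrib)
  qed
  finally show ?thesis .
qed

lemma moment_bound_le_norm_power:
  fixes c B N1 N2 H :: real
  assumes c: "0 \<le> c" and B: "0 \<le> B" and N1: "0 \<le> N1" and N2: "0 \<le> N2"
    and H: "0 \<le> H" "H \<le> c * (N1\<^sup>2 + N2\<^sup>2)" and k: "1 \<le> k"
  shows "4 ^ k * (H ^ k + B) \<le> (2 * (1 + c + B) * (1 + N1 + N2)) ^ (2 * k)"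
proof -
  define X where "X = (1 + N1 + N2)\<^sup>2"
  have X1: "1 \<le> X" unfolding X_def using N1 N2 by (simp add: one_le_power)
  have XN: "N1\<^sup>2 + N2\<^sup>2 \<le> X" unfolding X_def using N1 N2
    by (simp add: power2_eq_square algebra_simps)
  have "H ^ k \<le> (c * X) ^ k" using H c XN
    by (intro power_mono) (auto intro: order_trans mult_left_mono)
  also have "\<dots> = c ^ k * X ^ k" by (simp add: power_mult_distrib)
  finally have h1: "H ^ k \<le> c ^ k * X ^ k" .
  have h2: "B \<le> B * X ^ k" using B X1 by (simp add: mult_le_cancel_left1 one_le_power)
  have h3: "c ^ k + B \<le> (1 + c + B) ^ (2 * k)"
  proof -
    have "B \<le> 1 + B" by simp
    also have "\<dots> \<le> (1 + B) ^ k" using B k by (intro self_le_power) auto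
    finally have "c ^ k + B \<le> c ^ k + (1 + B) ^ k" by simp
    also have "\<dots> \<le> (c + (1 + B)) ^ k" using c B k by (intro add_power_le_power_add) auto
    also have "\<dots> \<le> (1 + c + B) ^ (2 * k)" using c B k by (simp add: algebra_simps power_increasing)
    finally show ?thesis .
  qed
  have "4 ^ k * (H ^ k + B) \<le> 4 ^ k * ((c ^ k + B) * X ^ k)"
    using h1 h2 by (intro mult_left_mono) (auto simp: algebra_simps)
  also have "\<dots> \<le> 4 ^ k * ((1 + c + B) ^ (2 * k) * X ^ k)"
    using h3 X1 by (intro mult_left_mono mult_right_mono) auto
  also have "\<dots> = (2 * (1 + c + B) * (1 + N1 + N2)) ^ (2 * k)"
  proof -
    have e1: "(2 * (1 + c + B) * (1 + N1 + N2)) ^ (2 * k)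
        = 2 ^ (2 * k) * (1 + c + B) ^ (2 * k) * (1 + N1 + N2) ^ (2 * k)"
      by (simp only: power_mult_distrib)
    have e2: "(2::real) ^ (2 * k) = 4 ^ k" by (simp add: power_mult)
    have e3: "X ^ k = (1 + N1 + N2) ^ (2 * k)" unfolding X_def by (simp add: power_mult)
    show ?thesis unfolding e1 e2 e3 by (simp add: mult.assoc)
  qed
  finally show ?thesis .
qed

lemma powr_eq_powr_diff_one_mult: "0 < L \<Longrightarrow> L powr s = L powr (s - 1) * (L::real)"
proof -
  assume L: "0 < L"
  have "L powr (s - 1) * L powr 1 = L powr (s - 1 + 1)" by (rule powr_add[symmetric])
  then show ?thesis using L by simp
qed

section \<open>Moment inequalities\<close>

lemma tendsto_power_ennreal:
  fixes u :: "nat \<Rightarrow> ennreal"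
  assumes "u \<longlonglongrightarrow> L"
  shows "(\<lambda>n. u n ^ k) \<longlonglongrightarrow> L ^ k"
proof (induction k)
  case 0 then show ?case by simp
next
  case (Suc k)
  have "(\<lambda>n. u n * u n ^ k) \<longlonglongrightarrow> L * L ^ k"
  proof (rule tendsto_mult_ennreal[OF assms Suc.IH])
    show "\<not> (L = 0 \<and> L ^ k = \<infinity> \<or> L = \<infinity> \<and> L ^ k = 0)"
      by (auto simp: power_eq_top_ennreal top_power_ennreal)
  qed
  then show ?case by simp
qed

lemma suminf_power_le_weighted:
  fixes Q b :: "nat \<Rightarrow> real"
  assumes Q: "\<And>l. 0 \<le> Q l" and b: "\<And>l. 0 < b l" and sb: "summable b" and k: "1 \<le> k"
  shows "(\<Sum>l. ennreal (Q l)) ^ k \<le> ennreal (suminf b ^ (k - 1))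
      * (\<Sum>l. ennreal (Q l ^ k / b l ^ (k - 1)))"
proof -
  let ?R = "ennreal (suminf b ^ (k - 1)) * (\<Sum>l. ennreal (Q l ^ k / b l ^ (k - 1)))"
  have lim: "(\<lambda>n. (\<Sum>l<n. ennreal (Q l)) ^ k) \<longlonglongrightarrow> (\<Sum>l. ennreal (Q l)) ^ k"
    by (intro tendsto_power_ennreal summable_LIMSEQ summableI)
  have "(\<Sum>l<n. ennreal (Q l)) ^ k \<le> ?R" for n
  proof -
    have "(\<Sum>l<n. ennreal (Q l)) ^ k = ennreal ((\<Sum>l<n. Q l) ^ k)"
      using Q by (simp add: sum_nonneg ennreal_power sum_ennreal)
    also have "\<dots> \<le> ennreal ((\<Sum>l<n. b l) ^ (k - 1) * (\<Sum>l<n. Q l ^ k / b l ^ (k - 1)))"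
      by (intro ennreal_leI sum_power_le_weighted) (use Q b k in auto)
    also have "\<dots> \<le> ennreal (suminf b ^ (k - 1) * (\<Sum>l<n. Q l ^ k / b l ^ (k - 1)))"
    proof (intro ennreal_leI mult_right_mono power_mono)
      show "(\<Sum>l<n. b l) \<le> suminf b" using sb b by (intro sum_le_suminf) (auto intro: less_imp_le)
    qed (use Q b[THEN less_imp_le] in \<open>auto intro!: sum_nonneg divide_nonneg_nonneg\<close>)
    also have "\<dots> = ennreal (suminf b ^ (k - 1)) * (\<Sum>l<n. ennreal (Q l ^ k / b l ^ (k - 1)))"
      using Q b sb by (simp add: ennreal_mult sum_ennreal suminf_nonneg less_imp_le sum_nonneg)
    also have "\<dots> \<le> ?R"
      by (intro mult_left_mono) (auto intro: sum_le_suminf summableI)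
    finally show ?thesis .
  qed
  then show ?thesis using LIMSEQ_le_const2[OF lim] by blast
qed

lemma nn_integral_suminf_power_le:
  fixes Q :: "nat \<Rightarrow> 'a \<Rightarrow> real" and b :: "nat \<Rightarrow> real"
  assumes Qm: "\<And>l. Q l \<in> borel_measurable M" and Q: "\<And>l \<omega>. 0 \<le> Q l \<omega>"
    and b: "\<And>l. 0 < b l" and sb: "summable b" and k: "1 \<le> k"
    and E: "\<And>l. (\<integral>\<^sup>+\<omega>. ennreal (Q l \<omega> ^ k) \<partial>M) \<le> ennreal (b l ^ k)"
  shows "(\<integral>\<^sup>+\<omega>. (\<Sum>l. ennreal (Q l \<omega>)) ^ k \<partial>M) \<le> ennreal (suminf b ^ k)"
proof -
  have "(\<integral>\<^sup>+\<omega>. (\<Sum>l. ennreal (Q l \<omega>)) ^ k \<partial>M)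
      \<le> (\<integral>\<^sup>+\<omega>. ennreal (suminf b ^ (k - 1)) * (\<Sum>l. ennreal (Q l \<omega> ^ k / b l ^ (k - 1))) \<partial>M)"
    by (intro nn_integral_mono suminf_power_le_weighted Q b sb k)
  also have "\<dots> = ennreal (suminf b ^ (k - 1)) * (\<Sum>l. \<integral>\<^sup>+\<omega>. ennreal (Q l \<omega> ^ k / b l ^ (k - 1)) \<partial>M)"
    using Qm by (simp add: nn_integral_cmult nn_integral_suminf)
  also have "\<dots> \<le> ennreal (suminf b ^ (k - 1)) * (\<Sum>l. ennreal (b l))"
  proof (intro mult_left_mono suminf_le summableI)
    fix l
    have "(\<integral>\<^sup>+\<omega>. ennreal (Q l \<omega> ^ k / b l ^ (k - 1)) \<partial>M)
        = (\<integral>\<^sup>+\<omega>. ennreal (Q l \<omega> ^ k) * ennreal (1 / b l ^ (k - 1)) \<partial>M)"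
      using b[of l] Q by (intro nn_integral_cong) (simp add: ennreal_mult[symmetric])
    also have "\<dots> = (\<integral>\<^sup>+\<omega>. ennreal (Q l \<omega> ^ k) \<partial>M) * ennreal (1 / b l ^ (k - 1))"
      using Qm by (simp add: nn_integral_multc)
    also have "\<dots> \<le> ennreal (b l ^ k) * ennreal (1 / b l ^ (k - 1))"
      by (intro mult_right_mono E) simp
    also have "\<dots> = ennreal (b l)"
    proof -
      obtain k' where kk: "k = Suc k'" using k by (cases k) auto
      show ?thesis using b[of l] unfolding kk by (simp add: ennreal_mult[symmetric])
    qed
    finally show "(\<integral>\<^sup>+\<omega>. ennreal (Q l \<omega> ^ k / b l ^ (k - 1)) \<partial>M) \<le> ennreal (b l)" .
  qed simp
  also have "\<dots> = ennreal (suminf b ^ k)"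
  proof -
    have "(\<Sum>l. ennreal (b l)) = ennreal (suminf b)" using sb b
      by (simp add: suminf_ennreal2 less_imp_le)
    moreover have "0 \<le> suminf b" using sb b by (simp add: suminf_nonneg less_imp_le)
    moreover obtain k' where kk: "k = Suc k'" using k by (cases k) auto
    ultimately show ?thesis by (simp add: ennreal_mult[symmetric] kk mult.commute)
  qed
  finally show ?thesis .
qed

lemma nn_integral_power_le_of_tendsto:
  fixes S :: "nat \<Rightarrow> 'a \<Rightarrow> real"
  assumes S: "\<And>n. S n \<in> borel_measurable M"
    and lim: "\<And>\<omega>. \<omega> \<in> space M \<Longrightarrow> (\<lambda>n. S n \<omega>) \<longlonglongrightarrow> X \<omega>"
    and bound: "eventually (\<lambda>n. (\<integral>\<^sup>+\<omega>. ennreal (S n \<omega> ^ j) \<partial>M) \<le> c) sequentially"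
  shows "X \<in> borel_measurable M \<and> (\<integral>\<^sup>+\<omega>. ennreal (X \<omega> ^ j) \<partial>M) \<le> c"
proof
  show "X \<in> borel_measurable M" by (rule borel_measurable_LIMSEQ_metric[OF S lim])
  have "(\<integral>\<^sup>+\<omega>. ennreal (X \<omega> ^ j) \<partial>M) = (\<integral>\<^sup>+\<omega>. liminf (\<lambda>n. ennreal (S n \<omega> ^ j)) \<partial>M)"
  proof (intro nn_integral_cong)
    fix \<omega> assume "\<omega> \<in> space M"
    have "(\<lambda>n. ennreal (S n \<omega> ^ j)) \<longlonglongrightarrow> ennreal (X \<omega> ^ j)"
      by (intro tendsto_ennrealI tendsto_power lim[OF \<open>\<omega> \<in> space M\<close>])
    then show "ennreal (X \<omega> ^ j) = liminf (\<lambda>n. ennreal (S n \<omega> ^ j))"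
      by (intro sym[OF lim_imp_Liminf]) auto
  qed
  also have "\<dots> \<le> liminf (\<lambda>n. \<integral>\<^sup>+\<omega>. ennreal (S n \<omega> ^ j) \<partial>M)"
    by (rule nn_integral_liminf) (use S in measurable)
  also have "\<dots> \<le> c"
    by (rule Liminf_le[OF sequentially_bot bound])
  finally show "(\<integral>\<^sup>+\<omega>. ennreal (X \<omega> ^ j) \<partial>M) \<le> c" .
qed

lemma nn_integral_sum_squares_power_le:
  fixes X Y :: "'a \<Rightarrow> real"
  assumes [measurable]: "X \<in> borel_measurable M" "Y \<in> borel_measurable M"
  shows "(\<integral>\<^sup>+\<omega>. ennreal (((X \<omega>)\<^sup>2 + (Y \<omega>)\<^sup>2) ^ k) \<partial>M)
    \<le> ennreal (2 ^ k) * (\<integral>\<^sup>+\<omega>. ennreal (X \<omega> ^ (2*k)) \<partial>M)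
      + ennreal (2 ^ k) * (\<integral>\<^sup>+\<omega>. ennreal (Y \<omega> ^ (2*k)) \<partial>M)"
proof -
  have "(\<integral>\<^sup>+\<omega>. ennreal (((X \<omega>)\<^sup>2 + (Y \<omega>)\<^sup>2) ^ k) \<partial>M)
      \<le> (\<integral>\<^sup>+\<omega>. ennreal (2 ^ k) * ennreal (X \<omega> ^ (2*k))
          + ennreal (2 ^ k) * ennreal (Y \<omega> ^ (2*k)) \<partial>M)"
  proof (intro nn_integral_mono)
    fix \<omega>
    have "((X \<omega>)\<^sup>2 + (Y \<omega>)\<^sup>2) ^ k \<le> 2 ^ k * (((X \<omega>)\<^sup>2) ^ k + ((Y \<omega>)\<^sup>2) ^ k)"
      by (intro power_add_le_two_power) auto
    then show "ennreal (((X \<omega>)\<^sup>2 + (Y \<omega>)\<^sup>2) ^ k)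
        \<le> ennreal (2 ^ k) * ennreal (X \<omega> ^ (2*k)) + ennreal (2 ^ k) * ennreal (Y \<omega> ^ (2*k))"
      by (simp add: ennreal_mult[symmetric] ennreal_plus[symmetric] power_mult distrib_left del:
          ennreal_plus)
  qed
  also have "\<dots> = ennreal (2 ^ k) * (\<integral>\<^sup>+\<omega>. ennreal (X \<omega> ^ (2*k)) \<partial>M)
      + ennreal (2 ^ k) * (\<integral>\<^sup>+\<omega>. ennreal (Y \<omega> ^ (2*k)) \<partial>M)"
    by (simp add: nn_integral_add nn_integral_cmult)
  finally show ?thesis .
qed

lemma nn_integral_sum_power_le:
  fixes Z :: "'i \<Rightarrow> 'a \<Rightarrow> real"
  assumes I: "finite I" and k: "1 \<le> k" and w: "0 \<le> w" and \<gamma>: "0 \<le> \<gamma>"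
    and Z: "\<And>m \<omega>. 0 \<le> Z m \<omega>" and ZM: "\<And>m. m \<in> I \<Longrightarrow> Z m \<in> borel_measurable M"
    and bound: "\<And>m. m \<in> I \<Longrightarrow> (\<integral>\<^sup>+\<omega>. ennreal (Z m \<omega> ^ k) \<partial>M) \<le> ennreal \<gamma>"
  shows "(\<integral>\<^sup>+\<omega>. ennreal ((\<Sum>m\<in>I. w * Z m \<omega>) ^ k) \<partial>M) \<le> ennreal ((w * real (card I)) ^ k * \<gamma>)"
proof -
  define c where "c = real (card I) ^ (k - 1) * w ^ k"
  have c: "0 \<le> c" using w by (simp add: c_def)
  have "ennreal ((\<Sum>m\<in>I. w * Z m \<omega>) ^ k) \<le> ennreal c * (\<Sum>m\<in>I. ennreal (Z m \<omega> ^ k))" for \<omega>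
  proof -
    have "(\<Sum>m\<in>I. w * Z m \<omega>) ^ k \<le> (\<Sum>m\<in>I. 1) ^ (k - 1) * (\<Sum>m\<in>I. (w * Z m \<omega>) ^ k / 1 ^ (k - 1))"
      using w Z k by (intro sum_power_le_weighted I) auto
    also have "\<dots> = c * (\<Sum>m\<in>I. Z m \<omega> ^ k)"
      by (simp add: c_def power_mult_distrib sum_distrib_left mult.assoc)
    finally have "ennreal ((\<Sum>m\<in>I. w * Z m \<omega>) ^ k) \<le> ennreal (c * (\<Sum>m\<in>I. Z m \<omega> ^ k))"
      by (rule ennreal_leI)
    also have "\<dots> = ennreal c * (\<Sum>m\<in>I. ennreal (Z m \<omega> ^ k))"
      using c Z by (simp add: ennreal_mult sum_ennreal sum_nonneg)
    finally show ?thesis .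
  qed
  then have "(\<integral>\<^sup>+\<omega>. ennreal ((\<Sum>m\<in>I. w * Z m \<omega>) ^ k) \<partial>M)
      \<le> (\<integral>\<^sup>+\<omega>. ennreal c * (\<Sum>m\<in>I. ennreal (Z m \<omega> ^ k)) \<partial>M)"
    by (intro nn_integral_mono)
  also have "\<dots> = ennreal c * (\<Sum>m\<in>I. \<integral>\<^sup>+\<omega>. ennreal (Z m \<omega> ^ k) \<partial>M)"
  proof -
    have ZkM: "(\<lambda>\<omega>. ennreal (Z m \<omega> ^ k)) \<in> borel_measurable M" if "m \<in> I" for m
    proof -
      have [measurable]: "Z m \<in> borel_measurable M" using ZM[OF that] .
      show ?thesis by measurable
    qed
    then have "(\<lambda>\<omega>. \<Sum>m\<in>I. ennreal (Z m \<omega> ^ k)) \<in> borel_measurable M" by (rule borel_measurable_sum)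
    then show ?thesis using ZkM by (simp add: nn_integral_cmult nn_integral_sum)
  qed
  also have "\<dots> \<le> ennreal c * (\<Sum>m\<in>I. ennreal \<gamma>)"
    using bound by (intro mult_left_mono sum_mono) auto
  also have "\<dots> = ennreal ((w * real (card I)) ^ k * \<gamma>)"
  proof -
    have "real (card I) ^ (k - 1) * real (card I) = real (card I) ^ k"
      using k by (cases k) (auto simp: mult.commute)
    moreover have "c * (real (card I) * \<gamma>) = (real (card I) ^ (k - 1) * real (card I)) * w ^ k * \<gamma>"
      by (simp add: c_def algebra_simps)
    ultimately have eq: "c * (real (card I) * \<gamma>) = (w * real (card I)) ^ k * \<gamma>"
      by (simp add: power_mult_distrib algebra_simps)
    have "ennreal c * (\<Sum>m\<in>I. ennreal \<gamma>) = ennreal (c * (real (card I) * \<gamma>))"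
      using c \<gamma> by (simp add: ennreal_mult[symmetric] ennreal_of_nat_eq_real_of_nat)
    also have "\<dots> = ennreal ((w * real (card I)) ^ k * \<gamma>)" by (simp only: eq)
    finally show ?thesis .
  qed
  finally show ?thesis .
qed

section \<open>Riemann sums\<close>

lemma integral_right_endpoint_error:
  fixes h :: "real \<Rightarrow> real"
  assumes ab: "a \<le> b" and hc: "continuous_on {a..b} h" and osc: "\<And>x. x \<in> {a..b} \<Longrightarrow> \<bar>h x - h b\<bar> \<le> c"
  shows "\<bar>integral {a..b} h - h b * (b - a)\<bar> \<le> c * (b - a)"
proof -
  have "((\<lambda>x. h b) has_integral (h b * (b - a))) {a..b}"
    using has_integral_const_real[of "h b" a b] ab by (simp add: mult.commute)
  then have "((\<lambda>x. h x - h b) has_integral (integral {a..b} h - h b * (b - a))) {a..b}"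
    using has_integral_diff[OF integrable_integral[OF integrable_continuous_interval[OF hc]]]
      by blast
  from has_integral_bound_real[where S="{}", OF _ _ this] show ?thesis
    using osc ab order_trans[OF abs_ge_zero osc[of b]] by simp
qed

lemma riemann_sum_tail_error_le:
  fixes h :: "real \<Rightarrow> real"
  assumes hc: "continuous_on {0..t} h" and t: "0 < t" and n: "0 < n" and j: "j \<le> n"
    and osc: "\<And>x y. x \<in> {0..t} \<Longrightarrow> y \<in> {0..t} \<Longrightarrow> \<bar>x - y\<bar> \<le> t / real n \<Longrightarrow> \<bar>h x - h y\<bar> \<le> c"
  shows "\<bar>integral {real j * t / real n..t} h - (\<Sum>i\<in>{Suc j..n}. h (real i * t / real n)
      * (t / real n))\<bar>
     \<le> c * t"
proof -
  define D where "D = t / real n"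
  define r where "r i = real i * t / real n" for i :: nat
  have D: "0 < D" using t n by (simp add: D_def)
  have rs: "r (Suc i) = r i + D" for i by (simp add: r_def D_def add_divide_distrib algebra_simps)
  have r0: "0 \<le> r i" for i using t by (simp add: r_def)
  have rn: "r i \<le> t" if "i \<le> n" for i using that t n by (simp add: r_def field_simps)
  have c: "0 \<le> c" using osc[of 0 0] t by simp
  have "\<bar>integral {r j..t} h - (\<Sum>i\<in>{Suc j..n}. h (r i) * D)\<bar> \<le> real q * D * c" if "j + q = n"
    for j q
    using that
  proof (induction q arbitrary: j)
    case 0 then show ?case using n by (simp add: r_def)
  next
    case (Suc q)
    have a1: "r j \<le> r (Suc j)" using rs[of j] D by simp
    have a2: "r (Suc j) \<le> t" using rn[of "Suc j"] Suc.prems by simp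
    have step: "\<bar>integral {r j..r (Suc j)} h - h (r (Suc j)) * D\<bar> \<le> c * D"
    proof -
      have "\<bar>integral {r j..r (Suc j)} h - h (r (Suc j)) * (r (Suc j) - r j)\<bar>
          \<le> c * (r (Suc j) - r j)"
      proof (rule integral_right_endpoint_error[OF a1])
        show "continuous_on {r j..r (Suc j)} h"
          by (rule continuous_on_subset[OF hc]) (use r0[of j] a2 in auto)
        show "\<bar>h x - h (r (Suc j))\<bar> \<le> c" if "x \<in> {r j..r (Suc j)}" for x
          using that r0[of j] a2 rs by (intro osc) (auto simp: D_def)
      qed
      then show ?thesis using rs by simp
    qed
    have "continuous_on {r j..t} h" by (rule continuous_on_subset[OF hc]) (use r0[of j] in auto)
    then have "integral {r j..r (Suc j)} h + integral {r (Suc j)..t} h = integral {r j..t} h"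
      using a1 a2 by (intro Henstock_Kurzweil_Integration.integral_combine
          integrable_continuous_interval)
    moreover have "(\<Sum>i\<in>{Suc j..n}. h (r i) * D)
        = h (r (Suc j)) * D + (\<Sum>i\<in>{Suc (Suc j)..n}. h (r i) * D)"
      using Suc.prems by (subst sum.atLeast_Suc_atMost) auto
    ultimately show ?case using step Suc.IH[of "Suc j"] Suc.prems by (simp add: algebra_simps)
  qed
  from this[of j "n - j"] have "\<bar>integral {r j..t} h - (\<Sum>i\<in>{Suc j..n}. h (r i) * D)\<bar>
      \<le> real (n - j) * D * c"
    using j by simp
  also have "\<dots> \<le> real n * D * c" using D c by (intro mult_right_mono) auto
  also have "\<dots> = c * t" using n by (simp add: D_def)
  finally show ?thesis by (simp add: r_def D_def)
qed

lemma riemann_sum_tail_uniform: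
  fixes h :: "real \<Rightarrow> real"
  assumes hc: "continuous_on {0..t} h" and t: "0 < t" and e: "0 < e"
  shows "\<exists>N. \<forall>n\<ge>N. \<forall>j\<le>n. \<bar>integral {real j * t / real n..t} h
            - (\<Sum>i\<in>{Suc j..n}. h (real i * t / real n) * (t / real n))\<bar> \<le> e"
proof -
  have "uniformly_continuous_on {0..t} h" using compact_uniformly_continuous[OF hc] by simp
  moreover have "0 < e / t" using e t by simp
  ultimately obtain d where d: "d > 0"
    and dd: "\<And>x x'. x \<in> {0..t} \<Longrightarrow> x' \<in> {0..t} \<Longrightarrow> dist x' x < d \<Longrightarrow> dist (h x') (h x) < e / t"
    unfolding uniformly_continuous_on_def by metis
  obtain N :: nat where N: "t / d < real N" using reals_Archimedean2 by blast
  have "\<bar>integral {real j * t / real n..t} h - (\<Sum>i\<in>{Suc j..n}. h (real i * t / real n)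
      * (t / real n))\<bar>
      \<le> e / t * t" if n: "N \<le> n" and j: "j \<le> n" for n j
  proof (rule riemann_sum_tail_error_le[OF hc t _ j])
    have "t / d < real n" using N n by (meson of_nat_le_iff order_less_le_trans)
    then show n0: "0 < n" using t d by (metis divide_pos_pos of_nat_0_less_iff order.strict_trans)
    have "t / real n < d" using \<open>t / d < real n\<close> d n0 by (simp add: field_simps)
    then show "\<bar>h x - h y\<bar> \<le> e / t"
      if "x \<in> {0..t}" "y \<in> {0..t}" "\<bar>x - y\<bar> \<le> t / real n" for x y
      using dd[OF that(2,1)] that(3) by (simp add: dist_real_def)
  qed
  then show ?thesis using t by auto
qed

lemma summation_by_parts_tail_aux:
  fixes a b :: "nat \<Rightarrow> real"
  shows "(\<Sum>j<n. (\<Sum>i\<in>{Suc j..n}. a i) * (b (Suc j) - b j)) = (\<Sum>i\<in>{1..n}. a i * (b i - b 0))"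
proof (induction n)
  case 0 then show ?case by simp
next
  case (Suc n)
  have "(\<Sum>j<Suc n. (\<Sum>i\<in>{Suc j..Suc n}. a i) * (b (Suc j) - b j))
      = (\<Sum>j<Suc n. (\<Sum>i\<in>{Suc j..n}. a i) * (b (Suc j) - b j) + a (Suc n) * (b (Suc j) - b j))"
    by (intro sum.cong refl) (simp add: algebra_simps)
  also have "\<dots> = (\<Sum>j<Suc n. (\<Sum>i\<in>{Suc j..n}. a i) * (b (Suc j) - b j))
      + a (Suc n) * (b (Suc n) - b 0)"
    by (simp add: sum.distrib sum_distrib_left[symmetric] sum_lessThan_telescope)
  also have "(\<Sum>j<Suc n. (\<Sum>i\<in>{Suc j..n}. a i) * (b (Suc j) - b j))
      = (\<Sum>j<n. (\<Sum>i\<in>{Suc j..n}. a i) * (b (Suc j) - b j))"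
    by simp
  finally show ?case using Suc.IH by simp
qed

lemma summation_by_parts_tail:
  fixes a b :: "nat \<Rightarrow> real"
  shows "(\<Sum>j<n. (c - (\<Sum>i\<in>{Suc j..n}. a i)) * (b (Suc j) - b j))
       = c * (b n - b 0) - (\<Sum>i\<in>{1..n}. a i * (b i - b 0))"
proof -
  have "(\<Sum>j<n. (c - (\<Sum>i\<in>{Suc j..n}. a i)) * (b (Suc j) - b j))
      = c * (\<Sum>j<n. (b (Suc j) - b j)) - (\<Sum>j<n. (\<Sum>i\<in>{Suc j..n}. a i) * (b (Suc j) - b j))"
    by (simp only: sum_distrib_left[symmetric] sum_subtractf left_diff_distrib
        right_diff_distrib[symmetric])
  then show ?thesis by (simp add: summation_by_parts_tail_aux sum_lessThan_telescope)
qed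

section \<open>Gaussian moments\<close>

lemma normal_even_moment_le:
  assumes s: "0 < s" and X: "distributed M lborel X (\<lambda>x. ennreal (normal_density 0 s x))"
  shows "(\<integral>\<^sup>+\<omega>. ennreal (X \<omega> ^ (2*k)) \<partial>M) \<le> ennreal (fact (2*k) * (s\<^sup>2) ^ k)"
proof -
  have hb: "has_bochner_integral lborel (\<lambda>x. normal_density 0 s x * (x - 0) ^ (2 * k))
      (fact (2 * k) / ((2 / s\<^sup>2)^k * fact k))"
    by (rule normal_moment_even[OF s])
  have "(\<integral>\<^sup>+\<omega>. ennreal (X \<omega> ^ (2*k)) \<partial>M)
      = (\<integral>\<^sup>+x. ennreal (normal_density 0 s x) * ennreal (x ^ (2*k)) \<partial>lborel)"
    using distributed_nn_integral[OF X, of "\<lambda>x. ennreal (x ^ (2*k))"] by simp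
  also have "\<dots> = (\<integral>\<^sup>+x. ennreal (normal_density 0 s x * (x - 0) ^ (2*k)) \<partial>lborel)"
    by (intro nn_integral_cong) (simp add: ennreal_mult'[symmetric] power_mult)
  also have "\<dots> = ennreal (fact (2 * k) / ((2 / s\<^sup>2)^k * fact k))"
    using hb by (subst nn_integral_eq_integral) (auto simp: has_bochner_integral_iff power_mult)
  also have "\<dots> \<le> ennreal (fact (2*k) * (s\<^sup>2) ^ k)"
  proof (rule ennreal_leI)
    have "1 \<le> (2::real)^k * fact k" by (metis fact_ge_1 one_le_power mult_mono' one_le_numeral
        mult_1 zero_le_one)
    then have "fact (2*k) * (s\<^sup>2)^k / (2^k * fact k) \<le> fact (2*k) * (s\<^sup>2)^k / 1"
      by (intro divide_left_mono) auto
    then show "fact (2 * k) / ((2 / s\<^sup>2)^k * fact k) \<le> fact (2*k) * (s\<^sup>2) ^ k"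
      using s by (simp add: power_divide field_simps)
  qed
  finally show ?thesis .
qed

lemma indep_normal_sum_even_moment_le:
  assumes P: "prob_space M" and fin: "finite J" and ind: "prob_space.indep_vars M (\<lambda>_. borel) X J"
    and dist: "\<And>j. j \<in> J \<Longrightarrow> distributed M lborel (X j) (\<lambda>x. ennreal (normal_density 0 (\<sigma> j) x))"
    and pos: "\<And>j. j \<in> J \<Longrightarrow> 0 < \<sigma> j"
  shows "(\<integral>\<^sup>+\<omega>. ennreal ((\<Sum>j\<in>J. d j * X j \<omega>) ^ (2*k)) \<partial>M)
           \<le> ennreal (fact (2*k) * (\<Sum>j\<in>J. (d j)\<^sup>2 * (\<sigma> j)\<^sup>2) ^ k)"
proof -
  interpret prob_space M by (rule P)
  define J' where "J' = {j\<in>J. d j \<noteq> 0}"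
  have J'J: "J' \<subseteq> J" by (auto simp: J'_def)
  have fin': "finite J'" using fin J'J finite_subset by blast
  have s1: "(\<Sum>j\<in>J. d j * X j \<omega>) = (\<Sum>j\<in>J'. d j * X j \<omega>)" for \<omega>
    by (rule sum.mono_neutral_right[OF fin J'J]) (auto simp: J'_def)
  have "(\<Sum>j\<in>J. (d j)\<^sup>2 * (\<sigma> j)\<^sup>2) = (\<Sum>j\<in>J'. (d j)\<^sup>2 * (\<sigma> j)\<^sup>2)"
    by (rule sum.mono_neutral_right[OF fin J'J]) (auto simp: J'_def)
  then have s2: "(\<Sum>j\<in>J. (d j)\<^sup>2 * (\<sigma> j)\<^sup>2) = (\<Sum>j\<in>J'. (\<bar>d j\<bar> * \<sigma> j)\<^sup>2)"
    by (simp add: power_mult_distrib)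
  show ?thesis
  proof (cases "J' = {}")
    case True
    then show ?thesis by (cases "k = 0") (simp_all add: s1 emeasure_space_1 power_0_left)
  next
    case False
    define Y where "Y j \<omega> = 0 + d j * X j \<omega>" for j \<omega>
    have indY: "indep_vars (\<lambda>_. borel) Y J'"
    proof -
      have "indep_vars (\<lambda>_. borel) (\<lambda>j \<omega>. (\<lambda>x. 0 + d j * x) (X j \<omega>)) J"
        by (rule indep_vars_compose2[OF ind]) simp
      then show ?thesis unfolding Y_def using indep_vars_subset J'J by blast
    qed
    have distY: "distributed M lborel (Y j) (\<lambda>x. ennreal (normal_density 0 (\<bar>d j\<bar> * \<sigma> j) x))"
      if "j \<in> J'" for j
    proof -
      have "j \<in> J" "d j \<noteq> 0" using that by (auto simp: J'_def)
      from normal_density_affine[OF dist[OF \<open>j \<in> J\<close>] pos[OF \<open>j \<in> J\<close>] \<open>d j \<noteq> 0\<close>, of 0]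
      show ?thesis by (simp add: Y_def[abs_def])
    qed
    have posY: "0 < \<bar>d j\<bar> * \<sigma> j" if "j \<in> J'" for j
      using that pos by (auto simp: J'_def)
    define s where "s = sqrt (\<Sum>j\<in>J'. (\<bar>d j\<bar> * \<sigma> j)\<^sup>2)"
    have "0 < (\<bar>d j\<bar> * \<sigma> j)\<^sup>2" if "j \<in> J'" for j
      by (metis posY that zero_less_power2 less_irrefl)
    then have s: "0 < s" unfolding s_def by (intro real_sqrt_gt_zero sum_pos[OF fin' False])
    have "distributed M lborel (\<lambda>\<omega>. \<Sum>j\<in>J'. Y j \<omega>) (\<lambda>x. ennreal (normal_density (\<Sum>j\<in>J'. 0) s x))"
      unfolding s_def by (rule sum_indep_normal[OF fin' False indY posY distY])
    then have "(\<integral>\<^sup>+\<omega>. ennreal ((\<Sum>j\<in>J'. Y j \<omega>) ^ (2*k)) \<partial>M) \<le> ennreal (fact (2*k) * (s\<^sup>2) ^ k)"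
      by (intro normal_even_moment_le[OF s]) simp
    moreover have "s\<^sup>2 = (\<Sum>j\<in>J. (d j)\<^sup>2 * (\<sigma> j)\<^sup>2)"
      unfolding s_def s2 by (simp add: sum_nonneg)
    ultimately show ?thesis by (simp add: s1 Y_def)
  qed
qed

section \<open>Wiener integrals of deterministic kernels\<close>

definition wiener_int :: "(real \<Rightarrow> real) \<Rightarrow> (real \<Rightarrow> real) \<Rightarrow> real \<Rightarrow> real" where
  "wiener_int f b t = f t * b t - f 0 * b 0 - integral {0..t} (\<lambda>r. deriv f r * b r)"

text \<open>Riemann sums for \<open>f\<close> at the grid points, chosen so that summation by parts turns the
  Riemann--Stieltjes sum with these weights exactly into a Riemann sum for \<open>wiener_int\<close>.\<close>
definition stieltjes_weight :: "(real \<Rightarrow> real) \<Rightarrow> (real \<Rightarrow> real) \<Rightarrow> real \<Rightarrow> nat \<Rightarrow> nat \<Rightarrow> real" where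
  "stieltjes_weight f f' t n j = f t - (\<Sum>i\<in>{Suc j..n}. f' (real i * t / real n) * (t / real n))"

lemma riemann_stieltjes_sum_tendsto_wiener_int:
  assumes t: "0 < t" and b0: "b 0 = 0" and bc: "continuous_on {0..t} b"
    and fd: "\<And>r. (f has_real_derivative f' r) (at r)" and f'c: "continuous_on UNIV f'"
  shows "(\<lambda>n. \<Sum>j<n. stieltjes_weight f f' t n j
      * (b (real (Suc j) * t / real n) - b (real j * t / real n)))
           \<longlonglongrightarrow> wiener_int f b t"
proof -
  define rr where "rr n i = real i * t / real n" for n i :: nat
  have df: "deriv f r = f' r" for r using fd by (rule DERIV_imp_deriv)
  have hc: "continuous_on {0..t} (\<lambda>r. f' r * b r)"
    using continuous_on_mult[OF continuous_on_subset[OF f'c] bc] by simp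
  have sum_eq: "(\<Sum>j<n. stieltjes_weight f f' t n j * (b (rr n (Suc j)) - b (rr n j)))
      = f t * b t - (\<Sum>i\<in>{1..n}. f' (rr n i) * b (rr n i) * (t / real n))" if "0 < n" for n
  proof -
    have "(\<Sum>j<n. stieltjes_weight f f' t n j * (b (rr n (Suc j)) - b (rr n j)))
        = f t * (b (rr n n) - b (rr n 0))
          - (\<Sum>i\<in>{1..n}. (f' (rr n i) * (t / real n)) * (b (rr n i) - b (rr n 0)))"
      unfolding stieltjes_weight_def rr_def
      by (rule summation_by_parts_tail[where a="\<lambda>i. f' (real i * t / real n) * (t / real n)"
            and b="\<lambda>i. b (real i * t / real n)"])
    moreover have "rr n n = t" "rr n 0 = 0" using that by (auto simp: rr_def)
    ultimately show ?thesis using b0 by (simp add: algebra_simps)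
  qed
  have "(\<lambda>n. \<Sum>j<n. stieltjes_weight f f' t n j
      * (b (rr n (Suc j)) - b (rr n j))) \<longlonglongrightarrow> wiener_int f b t"
  proof (rule LIMSEQ_I)
    fix e :: real assume e: "0 < e"
    obtain N where N: "\<And>n j. n \<ge> N \<Longrightarrow> j \<le> n \<Longrightarrow> \<bar>integral {real j * t / real n..t} (\<lambda>r. f' r * b r)
          - (\<Sum>i\<in>{Suc j..n}. f' (real i * t / real n) * b (real i * t / real n) * (t / real n))\<bar>
              \<le> e / 2"
      using riemann_sum_tail_uniform[OF hc t, of "e/2"] e by auto
    show "\<exists>no. \<forall>n\<ge>no. norm ((\<Sum>j<n. stieltjes_weight f f' t n j * (b (rr n (Suc j)) - b (rr n j)))
            - wiener_int f b t) < e"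
    proof (intro exI allI impI)
      fix n assume n: "max N 1 \<le> n"
      have "\<bar>integral {0..t} (\<lambda>r. f' r * b r) - (\<Sum>i\<in>{1..n}. f' (rr n i) * b (rr n i)
          * (t / real n))\<bar> \<le> e / 2"
        using N[of n 0] n by (simp add: rr_def)
      moreover have "(\<Sum>j<n. stieltjes_weight f f' t n j
          * (b (rr n (Suc j)) - b (rr n j))) - wiener_int f b t
          = integral {0..t} (\<lambda>r. f' r * b r) - (\<Sum>i\<in>{1..n}. f' (rr n i) * b (rr n i) * (t / real n))"
        using sum_eq[of n] n b0 by (simp add: wiener_int_def df)
      ultimately show "norm ((\<Sum>j<n. stieltjes_weight f f' t n j * (b (rr n (Suc j)) - b (rr n j)))
            - wiener_int f b t) < e"
        using e by simp
    qed
  qed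
  then show ?thesis by (simp add: rr_def)
qed

lemma stieltjes_weight_bound:
  assumes t: "0 < t" and fd: "\<And>r. (f has_real_derivative f' r) (at r)"
    and f'c: "continuous_on UNIV f'"
    and G: "0 < G" and fb: "\<And>r. r \<in> {0..t} \<Longrightarrow> \<bar>f r\<bar> \<le> G"
  shows "\<exists>N. \<forall>n\<ge>N. \<forall>j\<le>n. \<bar>stieltjes_weight f f' t n j\<bar> \<le> 2 * G"
proof -
  obtain N where N: "\<And>n j. n \<ge> N \<Longrightarrow> j \<le> n \<Longrightarrow> \<bar>integral {real j * t / real n..t} f'
            - (\<Sum>i\<in>{Suc j..n}. f' (real i * t / real n) * (t / real n))\<bar> \<le> G"
    using riemann_sum_tail_uniform[OF continuous_on_subset[OF f'c] t G] by auto
  have "\<bar>stieltjes_weight f f' t n j\<bar> \<le> 2 * G" if n: "n \<ge> N" and j: "j \<le> n" for n j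
  proof -
    define r where "r = real j * t / real n"
    have r: "0 \<le> r" "r \<le> t"
      using t j by (auto simp: r_def divide_le_eq mult_right_mono)
    have "(f' has_integral (f t - f r)) {r..t}"
    proof (rule fundamental_theorem_of_calculus)
      show "r \<le> t" using r by simp
      fix x assume "x \<in> {r..t}"
      show "(f has_vector_derivative f' x) (at x within {r..t})"
        by (rule has_real_derivative_iff_has_vector_derivative[THEN iffD1, OF
            has_field_derivative_at_within[OF fd]])
    qed
    then have "integral {r..t} f' = f t - f r" by (rule integral_unique)
    then have "\<bar>f t - f r - (\<Sum>i\<in>{Suc j..n}. f' (real i * t / real n) * (t / real n))\<bar> \<le> G"
      using N[OF n j] by (simp add: r_def)
    moreover have "\<bar>f r\<bar> \<le> G" using fb r by auto
    ultimately show ?thesis unfolding stieltjes_weight_def by linarith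
  qed
  then show ?thesis by blast
qed

lemma std_BM_measurable:
  assumes BM: "std_BM M T B" and r: "0 \<le> r" "r \<le> T"
  shows "B r \<in> borel_measurable M"
proof (cases "r = 0")
  case True
  have "(\<lambda>\<omega>. 0::real) \<in> borel_measurable M" by simp
  then show ?thesis using BM True unfolding std_BM_def
    by (subst measurable_cong[where g="\<lambda>_. 0"]) auto
next
  case False
  have inc: "\<forall>s t. 0 \<le> s \<and> s < t \<and> t \<le> T \<longrightarrow>
        distributed M lborel (\<lambda>\<omega>. B t \<omega> - B s \<omega>) (\<lambda>x. ennreal (normal_density 0 (sqrt (t - s)) x))"
    using BM unfolding std_BM_def by blast
  have "distributed M lborel (\<lambda>\<omega>. B r \<omega> - B 0 \<omega>) (\<lambda>x. ennreal (normal_density 0 (sqrt (r - 0)) x))"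
    by (rule inc[rule_format]) (use r False in auto)
  then have m: "(\<lambda>\<omega>. B r \<omega> - B 0 \<omega>) \<in> borel_measurable M"
    using distributed_measurable by (metis measurable_lborel1)
  show ?thesis
    using BM unfolding std_BM_def by (subst measurable_cong[where g="\<lambda>\<omega>. B r \<omega> - B 0 \<omega>"])
        (auto simp: m)
qed

lemma std_BM_increment_sum_moment:
  assumes P: "prob_space M" and BM: "std_BM M T B" and t: "0 < t" "t \<le> T" and n: "0 < n"
    and d: "\<And>j. j < n \<Longrightarrow> \<bar>d j\<bar> \<le> c"
  shows "(\<integral>\<^sup>+\<omega>. ennreal ((\<Sum>j<n. d j
      * (B (real (Suc j) * t / real n) \<omega> - B (real j * t / real n) \<omega>)) ^ (2*k)) \<partial>M)
     \<le> ennreal (fact (2*k) * (t * c\<^sup>2) ^ k)"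
proof -
  interpret prob_space M by (rule P)
  define rr where "rr i = real i * t / real n" for i :: nat
  define X where "X j \<omega> = B (rr (Suc j)) \<omega> - B (rr j) \<omega>" for j \<omega>
  have rr0: "0 \<le> rr i" for i using t by (simp add: rr_def)
  have rrT: "rr i \<le> T" if "i \<le> n" for i
  proof -
    have "real i * t \<le> real n * T" using that t by (intro mult_mono) auto
    then show ?thesis using n by (simp add: rr_def pos_divide_le_eq mult.commute)
  qed
  have rrs: "rr (Suc j) = rr j + t / real n" for j
    by (simp add: rr_def add_divide_distrib algebra_simps)
  have ind: "indep_vars (\<lambda>_. borel) X {..<n}"
  proof -
    have "0 \<le> rr 0 \<and> rr n \<le> T \<and> (\<forall>i<n. rr i \<le> rr (Suc i))"
      using rr0 rrT[of n] rrs t n by auto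
    then show ?thesis using BM unfolding std_BM_def X_def[abs_def] by blast
  qed
  have dist: "distributed M lborel (X j) (\<lambda>x. ennreal (normal_density 0 (sqrt (t / real n)) x))"
    if "j \<in> {..<n}" for j
  proof -
    have "0 \<le> rr j" "rr j < rr (Suc j)" "rr (Suc j) \<le> T"
      using rr0 rrs t n rrT[of "Suc j"] that by auto
    then have "distributed M lborel (\<lambda>\<omega>. B (rr (Suc j)) \<omega> - B (rr j) \<omega>)
        (\<lambda>x. ennreal (normal_density 0 (sqrt (rr (Suc j) - rr j)) x))"
      using BM unfolding std_BM_def by blast
    then show ?thesis using rrs[of j] by (simp add: X_def[abs_def])
  qed
  have "(\<integral>\<^sup>+\<omega>. ennreal ((\<Sum>j<n. d j * (B (rr (Suc j)) \<omega> - B (rr j) \<omega>)) ^ (2*k)) \<partial>M)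
      = (\<integral>\<^sup>+\<omega>. ennreal ((\<Sum>j\<in>{..<n}. d j * X j \<omega>) ^ (2*k)) \<partial>M)"
    by (simp add: X_def)
  also have "\<dots> \<le> ennreal (fact (2*k) * (\<Sum>j\<in>{..<n}. (d j)\<^sup>2 * (sqrt (t / real n))\<^sup>2) ^ k)"
    by (rule indep_normal_sum_even_moment_le[OF P _ ind dist]) (use t n in auto)
  also have "\<dots> \<le> ennreal (fact (2*k) * (t * c\<^sup>2) ^ k)"
  proof (intro ennreal_leI mult_left_mono power_mono)
    have sq: "(sqrt (t / real n))\<^sup>2 = t / real n" using t by simp
    have "(\<Sum>j\<in>{..<n}. (d j)\<^sup>2 * (sqrt (t / real n))\<^sup>2) \<le> (\<Sum>j\<in>{..<n}. c\<^sup>2 * (t / real n))"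
      unfolding sq
    proof (intro sum_mono mult_right_mono)
      fix j assume "j \<in> {..<n}"
      then show "(d j)\<^sup>2 \<le> c\<^sup>2" using power_mono[OF d abs_ge_zero, of j 2] by simp
    qed (use t in simp)
    also have "\<dots> = t * c\<^sup>2" using n by simp
    finally show "(\<Sum>j\<in>{..<n}. (d j)\<^sup>2 * (sqrt (t / real n))\<^sup>2) \<le> t * c\<^sup>2" .
  qed (auto intro: sum_nonneg)
  finally show ?thesis by (simp add: rr_def)
qed

lemma std_BM_wiener_int_moment:
  assumes P: "prob_space M" and BM: "std_BM M T B" and t: "0 \<le> t" "t \<le> T"
    and fd: "\<And>r. (f has_real_derivative f' r) (at r)" and f'c: "continuous_on UNIV f'"
    and G: "0 < G" and fb: "\<And>r. r \<in> {0..t} \<Longrightarrow> \<bar>f r\<bar> \<le> G"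
  shows "(\<lambda>\<omega>. wiener_int f (\<lambda>r. B r \<omega>) t) \<in> borel_measurable M
     \<and> (\<integral>\<^sup>+\<omega>. ennreal (wiener_int f (\<lambda>r. B r \<omega>) t ^ (2*k)) \<partial>M)
         \<le> ennreal (fact (2*k) * (4 * T * G\<^sup>2) ^ k)"
proof (cases "t = 0")
  case True
  interpret prob_space M by (rule P)
  have "0 \<le> fact (2*k) * (4 * T * G\<^sup>2) ^ k" using t by simp
  then show ?thesis using True by (cases "k = 0")
      (simp_all add: wiener_int_def emeasure_space_1 power_0_left)
next
  case False
  then have t0: "0 < t" using t by simp
  define S where "S n \<omega> = (\<Sum>j<n. stieltjes_weight f f' t n j
      * (B (real (Suc j) * t / real n) \<omega> - B (real j * t / real n) \<omega>))" for n \<omega>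
  have S: "S n \<in> borel_measurable M" for n
  proof -
    have Bm: "B (real i * t / real n) \<in> borel_measurable M" if "i \<le> n" for i
    proof (rule std_BM_measurable[OF BM])
      have "real i * t \<le> real n * T" using that t by (intro mult_mono) auto
      then show "real i * t / real n \<le> T"
        using t by (cases "n = 0") (auto simp: pos_divide_le_eq mult.commute)
    qed (use t in simp)
    have "B (real (Suc j) * t / real n) \<in> borel_measurable M"
        "B (real j * t / real n) \<in> borel_measurable M"
      if "j < n" for j
      using Bm[of "Suc j"] Bm[of j] that by auto
    then show ?thesis
      unfolding S_def[abs_def] by (auto intro!: borel_measurable_sum borel_measurable_times
          borel_measurable_diff)
  qed
  have lim: "(\<lambda>n. S n \<omega>) \<longlonglongrightarrow> wiener_int f (\<lambda>r. B r \<omega>) t" if "\<omega> \<in> space M" for \<omega>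
    unfolding S_def
  proof (rule riemann_stieltjes_sum_tendsto_wiener_int[OF t0 _ _ fd f'c])
    show "B 0 \<omega> = 0" using BM that by (simp add: std_BM_def)
    show "continuous_on {0..t} (\<lambda>r. B r \<omega>)"
      using BM that t by (auto simp: std_BM_def intro: continuous_on_subset)
  qed
  obtain N where N: "\<And>n j. n \<ge> N \<Longrightarrow> j \<le> n \<Longrightarrow> \<bar>stieltjes_weight f f' t n j\<bar> \<le> 2 * G"
    using stieltjes_weight_bound[OF t0 fd f'c G fb] by blast
  have bound: "(\<integral>\<^sup>+\<omega>. ennreal (S n \<omega> ^ (2*k)) \<partial>M) \<le> ennreal (fact (2*k) * (4 * T * G\<^sup>2) ^ k)"
    if n: "n \<ge> max N 1" for n
  proof -
    have "(\<integral>\<^sup>+\<omega>. ennreal (S n \<omega> ^ (2*k)) \<partial>M) \<le> ennreal (fact (2*k) * (t * (2 * G)\<^sup>2) ^ k)"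
      unfolding S_def using n N by (intro std_BM_increment_sum_moment[OF P BM t0 t(2)]) auto
    also have "\<dots> \<le> ennreal (fact (2*k) * (4 * T * G\<^sup>2) ^ k)"
    proof (intro ennreal_leI mult_left_mono power_mono)
      show "t * (2 * G)\<^sup>2 \<le> 4 * T * G\<^sup>2"
        using t mult_right_mono[OF t(2), of "4 * G\<^sup>2"]
          by (simp add: power_mult_distrib algebra_simps)
    qed (use t in auto)
    finally show ?thesis .
  qed
  have "\<forall>\<^sub>F n in sequentially. (\<integral>\<^sup>+\<omega>. ennreal (S n \<omega> ^ (2*k)) \<partial>M)
      \<le> ennreal (fact (2*k) * (4 * T * G\<^sup>2) ^ k)"
    using eventually_ge_at_top[of "max N 1"] by (rule eventually_mono) (rule bound)
  from nn_integral_power_le_of_tendsto[OF S lim this] show ?thesis by simp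
qed

section \<open>Coefficients of the noise\<close>

definition noise_amp :: "(nat \<Rightarrow> real) \<Rightarrow> nat \<Rightarrow> int \<Rightarrow> real" where
  "noise_amp A l m =
     (if m = 0 then sqrt (A l) else if 0 < m then sqrt (A l / 2) else (-1) ^ nat (- m)
         * sqrt (A l / 2))"

lemma noise_coeff_eq:
  "noise_coeff A \<beta> l m r \<omega> = complex_of_real (noise_amp A l m)
     * Complex (\<beta> (1, l, nat \<bar>m\<bar>) r \<omega>) (- real_of_int (sgn m) * \<beta> (2, l, nat \<bar>m\<bar>) r \<omega>)"
proof -
  consider "m = 0" | "0 < m" | "m < 0" by linarith
  then show ?thesis
    by cases (simp_all add: noise_coeff_def noise_amp_def complex_of_real_def complex_eq_iff)
qed

lemma noise_amp_squared_le:
  assumes "0 \<le> A l"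
  shows "(noise_amp A l m)\<^sup>2 \<le> A l"
proof -
  have "((-1::real) ^ n)\<^sup>2 = 1" for n by (simp add: power_mult[symmetric])
  then show ?thesis using assms by (auto simp: noise_amp_def power_mult_distrib)
qed

text \<open>The factor \<open>sgn m\<close> discards \<open>\<beta> (2, l, 0)\<close>, which is not among the Brownian motions of
  the family.\<close>
definition stoch_coeff :: "(nat \<Rightarrow> real) \<Rightarrow> (nat \<Rightarrow> real \<Rightarrow> real) \<Rightarrow> (nat \<times> nat \<times> nat \<Rightarrow> real \<Rightarrow> 'a \<Rightarrow> real)
    \<Rightarrow> real \<Rightarrow> 'a \<Rightarrow> nat \<Rightarrow> int \<Rightarrow> complex" where
  "stoch_coeff A F \<beta> t \<omega> l m = complex_of_real (noise_amp A l m)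
     * Complex (wiener_int (F l) (\<lambda>r. \<beta> (1, l, nat \<bar>m\<bar>) r \<omega>) t)
         (- real_of_int (sgn m) * wiener_int (F l) (\<lambda>r. \<beta> (2, l, nat \<bar>m\<bar>) r \<omega>) t)"

lemma wiener_int_scale: "wiener_int f (\<lambda>r. e * b r) t = e * wiener_int f b t"
proof -
  have "integral {0..t} (\<lambda>r. deriv f r * (e * b r)) = integral {0..t} (\<lambda>r. e *\<^sub>R (deriv f r * b r))"
    by (simp add: algebra_simps)
  then show ?thesis by (simp add: wiener_int_def algebra_simps)
qed

lemma det_stoch_int_of_real_Complex:
  fixes x y :: "real \<Rightarrow> real"
  assumes fd: "\<And>r. (f has_real_derivative f' r) (at r)" and f'c: "continuous_on UNIV f'"
    and x: "continuous_on {0..t} x" and y: "continuous_on {0..t} y"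
  shows "det_stoch_int f (\<lambda>r. complex_of_real c * Complex (x r) (y r)) t
       = complex_of_real c * Complex (wiener_int f x t) (wiener_int f y t)"
proof -
  have df: "deriv f = f'" using fd by (auto intro!: ext DERIV_imp_deriv)
  have gc: "continuous_on {0..t} f'" using f'c by (rule continuous_on_subset) simp
  let ?I1 = "integral {0..t} (\<lambda>r. f' r * x r)" and ?I2 = "integral {0..t} (\<lambda>r. f' r * y r)"
  have h1: "((\<lambda>r. f' r * x r) has_integral ?I1) {0..t}"
    by (intro integrable_integral integrable_continuous_interval continuous_on_mult gc x)
  have h2: "((\<lambda>r. f' r * y r) has_integral ?I2) {0..t}"
    by (intro integrable_integral integrable_continuous_interval continuous_on_mult gc y)
  have "((\<lambda>r. complex_of_real c * (complex_of_real (f' r * x r) + \<i> * complex_of_real (f' r * y r)))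
      has_integral (complex_of_real c * (complex_of_real ?I1 + \<i> * complex_of_real ?I2))) {0..t}"
    by (intro has_integral_mult_right has_integral_add has_integral_of_real h1 h2)
  then have "integral {0..t} (\<lambda>r. complex_of_real (f' r)
      * (complex_of_real c * Complex (x r) (y r)))
       = complex_of_real c * Complex ?I1 ?I2"
    by (intro integral_unique) (simp add: Complex_eq algebra_simps)
  then show ?thesis
    unfolding det_stoch_int_def wiener_int_def df by (simp add: Complex_eq algebra_simps)
qed

lemma noise_family_path:
  assumes nf: "noise_family M T \<beta>" and i: "i \<in> bm_index" and \<omega>: "\<omega> \<in> space M" and tT: "t \<le> T"
  shows "\<beta> i 0 \<omega> = 0" "continuous_on {0..t} (\<lambda>r. \<beta> i r \<omega>)"
proof -
  have "std_BM M T (\<beta> i)" using nf i unfolding noise_family_def by blast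
  then have "\<beta> i 0 \<omega> = 0 \<and> continuous_on {0..T} (\<lambda>r. \<beta> i r \<omega>)" using \<omega> unfolding std_BM_def by blast
  then show "\<beta> i 0 \<omega> = 0" "continuous_on {0..t} (\<lambda>r. \<beta> i r \<omega>)"
    using tT by (auto intro: continuous_on_subset)
qed

lemma det_stoch_int_noise_coeff:
  assumes nf: "noise_family M T \<beta>" and \<omega>: "\<omega> \<in> space M" and tT: "t \<le> T" and m: "\<bar>m\<bar> \<le> int l"
    and fd: "\<And>r. (F l has_real_derivative f' r) (at r)" and f'c: "continuous_on UNIV f'"
  shows "det_stoch_int (F l) (\<lambda>r. noise_coeff A \<beta> l m r \<omega>) t = stoch_coeff A F \<beta> t \<omega> l m"
proof -
  have i1: "(1, l, nat \<bar>m\<bar>) \<in> bm_index" using m by (auto simp: bm_index_def)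
  have x: "continuous_on {0..t} (\<lambda>r. \<beta> (1, l, nat \<bar>m\<bar>) r \<omega>)"
    using noise_family_path[OF nf i1 \<omega> tT] by blast
  have y: "continuous_on {0..t} (\<lambda>r. - real_of_int (sgn m) * \<beta> (2, l, nat \<bar>m\<bar>) r \<omega>)"
  proof (cases "m = 0")
    case False
    then have "(2, l, nat \<bar>m\<bar>) \<in> bm_index" using m by (auto simp: bm_index_def)
    then show ?thesis using noise_family_path[OF nf _ \<omega> tT] by (intro continuous_on_mult_left) blast
  qed simp
  show ?thesis
    unfolding noise_coeff_eq det_stoch_int_of_real_Complex[OF fd f'c x y] wiener_int_scale
        stoch_coeff_def ..
qed

lemma sgn_wiener_int_moment:
  assumes P: "prob_space M" and nf: "noise_family M T \<beta>" and t: "0 \<le> t" "t \<le> T"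
    and m: "\<bar>m\<bar> \<le> int l"
    and fd: "\<And>r. (f has_real_derivative f' r) (at r)" and f'c: "continuous_on UNIV f'"
    and G: "0 < G" and fb: "\<And>r. r \<in> {0..t} \<Longrightarrow> \<bar>f r\<bar> \<le> G"
  shows "(\<lambda>\<omega>. - real_of_int (sgn m) * wiener_int f (\<lambda>r. \<beta> (2, l, nat \<bar>m\<bar>) r \<omega>) t) \<in> borel_measurable M
    \<and> (\<integral>\<^sup>+\<omega>. ennreal
          ((- real_of_int (sgn m) * wiener_int f (\<lambda>r. \<beta> (2, l, nat \<bar>m\<bar>) r \<omega>) t) ^ (2*k)) \<partial>M)
      \<le> ennreal (fact (2*k) * (4 * T * G\<^sup>2) ^ k)"
proof (cases "m = 0")
  case True
  interpret prob_space M by (rule P)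
  have "0 \<le> fact (2*k) * (4 * T * G\<^sup>2) ^ k" using t by simp
  then show ?thesis using True by (cases "k = 0") (simp_all add: emeasure_space_1 power_0_left)
next
  case False
  have "(2, l, nat \<bar>m\<bar>) \<in> bm_index" using m False by (auto simp: bm_index_def)
  then have "std_BM M T (\<beta> (2, l, nat \<bar>m\<bar>))" using nf by (simp add: noise_family_def)
  from std_BM_wiener_int_moment[OF P this t fd f'c G fb, of k]
  have W: "(\<lambda>\<omega>. wiener_int f (\<lambda>r. \<beta> (2, l, nat \<bar>m\<bar>) r \<omega>) t) \<in> borel_measurable M"
    "(\<integral>\<^sup>+\<omega>. ennreal (wiener_int f (\<lambda>r. \<beta> (2, l, nat \<bar>m\<bar>) r \<omega>) t ^ (2*k)) \<partial>M)
      \<le> ennreal (fact (2*k) * (4 * T * G\<^sup>2) ^ k)"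
    by blast+
  have "(- real_of_int (sgn m))\<^sup>2 = 1" using False by (cases "0 < m") auto
  then have "(- real_of_int (sgn m) * x) ^ (2*k) = x ^ (2*k)" for x
    by (simp add: power_mult power_mult_distrib)
  then show ?thesis using W by (auto intro!: borel_measurable_times)
qed

lemma stoch_coeff_moment:
  assumes P: "prob_space M" and nf: "noise_family M T \<beta>" and t: "0 \<le> t" "t \<le> T"
    and m: "\<bar>m\<bar> \<le> int l" and A: "0 \<le> A l"
    and fd: "\<And>r. (F l has_real_derivative f' r) (at r)" and f'c: "continuous_on UNIV f'"
    and G: "0 < G" and fb: "\<And>r. r \<in> {0..t} \<Longrightarrow> \<bar>F l r\<bar> \<le> G"
  shows "(\<lambda>\<omega>. stoch_coeff A F \<beta> t \<omega> l m) \<in> borel_measurable M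
    \<and> (\<integral>\<^sup>+\<omega>. ennreal (((cmod (stoch_coeff A F \<beta> t \<omega> l m))\<^sup>2) ^ k) \<partial>M)
       \<le> ennreal (2 ^ (k+1) * fact (2*k) * (4 * T * A l * G\<^sup>2) ^ k)"
proof -
  interpret prob_space M by (rule P)
  define g where "g = fact (2*k) * (4 * T * G\<^sup>2) ^ k"
  have g: "0 \<le> g" using t by (simp add: g_def)
  have BM: "std_BM M T (\<beta> i)" if "i \<in> bm_index" for i using nf that by (simp add: noise_family_def)
  define X where "X \<omega> = wiener_int (F l) (\<lambda>r. \<beta> (1, l, nat \<bar>m\<bar>) r \<omega>) t" for \<omega>
  define Y where "Y \<omega> = - real_of_int (sgn m) * wiener_int (F l) (\<lambda>r. \<beta> (2, l, nat \<bar>m\<bar>) r \<omega>) t"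
    for \<omega>
  have X: "X \<in> borel_measurable M \<and> (\<integral>\<^sup>+\<omega>. ennreal (X \<omega> ^ (2*k)) \<partial>M) \<le> ennreal g"
    unfolding X_def g_def
    by (rule std_BM_wiener_int_moment[OF P BM t fd f'c G fb]) (use m in \<open>auto simp: bm_index_def\<close>)
  have Y: "Y \<in> borel_measurable M \<and> (\<integral>\<^sup>+\<omega>. ennreal (Y \<omega> ^ (2*k)) \<partial>M) \<le> ennreal g"
    unfolding Y_def[abs_def] g_def by (rule sgn_wiener_int_moment[OF P nf t m fd f'c G fb])
  have [measurable]: "X \<in> borel_measurable M" "Y \<in> borel_measurable M" using X Y by blast+
  have Z: "stoch_coeff A F \<beta> t \<omega> l m = complex_of_real (noise_amp A l m) * Complex (X \<omega>) (Y \<omega>)"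
    for \<omega>
    by (simp add: stoch_coeff_def X_def Y_def)
  have meas: "(\<lambda>\<omega>. stoch_coeff A F \<beta> t \<omega> l m) \<in> borel_measurable M"
    unfolding Z Complex_eq by measurable
  have "(\<integral>\<^sup>+\<omega>. ennreal (((cmod (stoch_coeff A F \<beta> t \<omega> l m))\<^sup>2) ^ k) \<partial>M)
      \<le> (\<integral>\<^sup>+\<omega>. ennreal (A l ^ k) * ennreal (((X \<omega>)\<^sup>2 + (Y \<omega>)\<^sup>2) ^ k) \<partial>M)"
  proof (intro nn_integral_mono)
    fix \<omega>
    have "(cmod (stoch_coeff A F \<beta> t \<omega> l m))\<^sup>2 = (noise_amp A l m)\<^sup>2 * ((X \<omega>)\<^sup>2 + (Y \<omega>)\<^sup>2)"
      by (simp add: Z norm_mult complex_norm power_mult_distrib)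
    also have "\<dots> \<le> A l * ((X \<omega>)\<^sup>2 + (Y \<omega>)\<^sup>2)"
      by (intro mult_right_mono noise_amp_squared_le A) simp
    finally have "((cmod (stoch_coeff A F \<beta> t \<omega> l m))\<^sup>2) ^ k \<le> (A l * ((X \<omega>)\<^sup>2 + (Y \<omega>)\<^sup>2)) ^ k"
      by (intro power_mono) auto
    then show "ennreal (((cmod (stoch_coeff A F \<beta> t \<omega> l m))\<^sup>2) ^ k)
        \<le> ennreal (A l ^ k) * ennreal (((X \<omega>)\<^sup>2 + (Y \<omega>)\<^sup>2) ^ k)"
      using A by (simp add: ennreal_mult[symmetric] power_mult_distrib ennreal_leI)
  qed
  also have "\<dots> = ennreal (A l ^ k) * (\<integral>\<^sup>+\<omega>. ennreal (((X \<omega>)\<^sup>2 + (Y \<omega>)\<^sup>2) ^ k) \<partial>M)"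
    by (simp add: nn_integral_cmult)
  also have "\<dots> \<le> ennreal (A l ^ k) * (ennreal (2 ^ k) * ennreal g + ennreal (2 ^ k) * ennreal g)"
  proof (rule mult_left_mono)
    have "(\<integral>\<^sup>+\<omega>. ennreal (((X \<omega>)\<^sup>2 + (Y \<omega>)\<^sup>2) ^ k) \<partial>M)
        \<le> ennreal (2 ^ k) * (\<integral>\<^sup>+\<omega>. ennreal (X \<omega> ^ (2*k)) \<partial>M)
          + ennreal (2 ^ k) * (\<integral>\<^sup>+\<omega>. ennreal (Y \<omega> ^ (2*k)) \<partial>M)"
      by (rule nn_integral_sum_squares_power_le) (use X Y in auto)
    also have "\<dots> \<le> ennreal (2 ^ k) * ennreal g + ennreal (2 ^ k) * ennreal g"
      using X Y by (intro add_mono mult_left_mono) auto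
    finally show "(\<integral>\<^sup>+\<omega>. ennreal (((X \<omega>)\<^sup>2 + (Y \<omega>)\<^sup>2) ^ k) \<partial>M)
        \<le> ennreal (2 ^ k) * ennreal g + ennreal (2 ^ k) * ennreal g" .
  qed simp
  also have "\<dots> = ennreal (A l ^ k * (2 ^ k * g + 2 ^ k * g))"
    using A g by (simp add: ennreal_mult[symmetric] ennreal_plus[symmetric] del: ennreal_plus)
  also have "\<dots> = ennreal (2 ^ (k+1) * fact (2*k) * (4 * T * A l * G\<^sup>2) ^ k)"
    by (simp add: g_def power_mult_distrib algebra_simps)
  finally show ?thesis using meas by blast
qed

lemma stoch_coeff_degree_moment:
  assumes P: "prob_space M" and nf: "noise_family M T \<beta>" and t: "0 \<le> t" "t \<le> T" and k: "1 \<le> k"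
    and A: "0 \<le> A l" and w: "0 \<le> w"
    and fd: "\<And>r. (F l has_real_derivative f' r) (at r)" and f'c: "continuous_on UNIV f'"
    and G: "0 < G" and fb: "\<And>r. r \<in> {0..t} \<Longrightarrow> \<bar>F l r\<bar> \<le> G"
  shows "(\<integral>\<^sup>+\<omega>. ennreal ((\<Sum>m\<in>{- int l..int l}. w * (cmod (stoch_coeff A F \<beta> t \<omega> l m))\<^sup>2) ^ k) \<partial>M)
      \<le> ennreal (2 ^ (k+1) * fact (2*k) * (4 * T * (w * A l * (2 * real l + 1) * G\<^sup>2)) ^ k)"
proof -
  define \<gamma> where "\<gamma> = 2 ^ (k+1) * fact (2*k) * (4 * T * A l * G\<^sup>2) ^ k"
  have moment: "(\<lambda>\<omega>. (cmod (stoch_coeff A F \<beta> t \<omega> l m))\<^sup>2) \<in> borel_measurable M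
      \<and> (\<integral>\<^sup>+\<omega>. ennreal (((cmod (stoch_coeff A F \<beta> t \<omega> l m))\<^sup>2) ^ k) \<partial>M) \<le> ennreal \<gamma>"
    if "m \<in> {- int l..int l}" for m
  proof -
    have "\<bar>m\<bar> \<le> int l" using that by auto
    from stoch_coeff_moment[where F=F and l=l and A=A and m=m, OF P nf t this A fd f'c G fb, of k]
    have [measurable]: "(\<lambda>\<omega>. stoch_coeff A F \<beta> t \<omega> l m) \<in> borel_measurable M"
      and "(\<integral>\<^sup>+\<omega>. ennreal (((cmod (stoch_coeff A F \<beta> t \<omega> l m))\<^sup>2) ^ k) \<partial>M) \<le> ennreal \<gamma>"
      by (simp_all add: \<gamma>_def)
    moreover have "(\<lambda>\<omega>. (cmod (stoch_coeff A F \<beta> t \<omega> l m))\<^sup>2) \<in> borel_measurable M" by measurable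
    ultimately show ?thesis by blast
  qed
  have "(\<integral>\<^sup>+\<omega>. ennreal ((\<Sum>m\<in>{- int l..int l}. w * (cmod (stoch_coeff A F \<beta> t \<omega> l m))\<^sup>2) ^ k) \<partial>M)
      \<le> ennreal ((w * real (card {- int l..int l})) ^ k * \<gamma>)"
    by (rule nn_integral_sum_power_le[OF _ k w]) (use moment t A in \<open>auto simp: \<gamma>_def\<close>)
  also have "\<dots> = ennreal (2 ^ (k+1) * fact (2*k)
      * (4 * T * (w * A l * (2 * real l + 1) * G\<^sup>2)) ^ k)"
  proof -
    have "(4 * T * (w * A l * (2 * real l + 1) * G\<^sup>2)) ^ k
        = (w * (2 * real l + 1)) ^ k * (4 * T * A l * G\<^sup>2) ^ k"
      unfolding power_mult_distrib[symmetric] by (simp add: algebra_simps)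
    moreover have "real (card {- int l..int l}) = 2 * real l + 1" by simp
    ultimately show ?thesis by (simp add: \<gamma>_def mult_ac)
  qed
  finally show ?thesis .
qed

lemma C1_differentiable_on_UNIV_E:
  assumes "f C1_differentiable_on UNIV"
  obtains f' where "\<And>r. (f has_real_derivative f' r) (at r)" "continuous_on UNIV f'"
  using assms unfolding C1_differentiable_on_def has_real_derivative_iff_has_vector_derivative
    by blast

lemma stoch_coeff_measurable:
  assumes P: "prob_space M" and nf: "noise_family M T \<beta>" and t: "0 \<le> t" "t \<le> T"
    and m: "\<bar>m\<bar> \<le> int l" and A: "0 \<le> A l"
    and F: "F l C1_differentiable_on UNIV"
    and G: "0 < G" and fb: "\<And>r. r \<in> {0..t} \<Longrightarrow> \<bar>F l r\<bar> \<le> G"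
  shows "(\<lambda>\<omega>. stoch_coeff A F \<beta> t \<omega> l m) \<in> borel_measurable M"
proof -
  obtain f' where "\<And>r. (F l has_real_derivative f' r) (at r)" "continuous_on UNIV f'"
    using C1_differentiable_on_UNIV_E[OF F] by blast
  from stoch_coeff_moment[where F=F and l=l and A=A and m=m, OF P nf t m A this G fb] show ?thesis
    by blast
qed

lemma stoch_coeff_hs_moment:
  assumes P: "prob_space M" and nf: "noise_family M T \<beta>" and t: "0 \<le> t" "t \<le> T" and k: "1 \<le> k"
    and A: "\<And>l. 0 \<le> A l"
    and F: "\<And>l. F l C1_differentiable_on UNIV"
    and G: "\<And>l. 0 < G l" and fb: "\<And>l r. r \<in> {0..t} \<Longrightarrow> \<bar>F l r\<bar> \<le> G l"
    and sb: "summable (\<lambda>l. (1 + lam l) powr s * A l * (2 * real l + 1) * (G l)\<^sup>2)"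
  shows "\<exists>B. (\<integral>\<^sup>+\<omega>. hs_sq s (stoch_coeff A F \<beta> t \<omega>) ^ k \<partial>M) \<le> ennreal B"
proof -
  define w where "w l = (1 + lam l) powr s" for l
  define x where "x l = w l * A l * (2 * real l + 1) * (G l)\<^sup>2" for l
  define Q where "Q l \<omega> = (\<Sum>m\<in>{- int l..int l}. w l * (cmod (stoch_coeff A F \<beta> t \<omega> l m))\<^sup>2)" for l \<omega>
  define \<kappa> where "\<kappa> = 16 * T * max 1 (fact (2*k))"
  define b where "b l = \<kappa> * x l + (1/2) ^ l" for l
    \<comment> \<open>the summand \<open>(1/2) ^ l\<close> only serves to make \<open>b l\<close> positive\<close>
  have w: "0 \<le> w l" for l by (simp add: w_def)
  have x: "0 \<le> x l" for l using w[of l] A[of l] by (simp add: x_def)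
  have \<kappa>: "0 \<le> \<kappa>" using t by (simp add: \<kappa>_def)
  have Q: "0 \<le> Q l \<omega>" for l \<omega> unfolding Q_def using w by (intro sum_nonneg) simp
  have Qm: "Q l \<in> borel_measurable M" for l
  proof -
    have "(\<lambda>\<omega>. w l * (cmod (stoch_coeff A F \<beta> t \<omega> l m))\<^sup>2) \<in> borel_measurable M"
      if "m \<in> {- int l..int l}" for m
    proof -
      have "\<bar>m\<bar> \<le> int l" using that by auto
      then have [measurable]: "(\<lambda>\<omega>. stoch_coeff A F \<beta> t \<omega> l m) \<in> borel_measurable M"
        by (rule stoch_coeff_measurable[where F=F and l=l and A=A and m=m, OF P nf t _ A F G fb])
      show ?thesis by measurable
    qed
    then show ?thesis unfolding Q_def[abs_def] by (rule borel_measurable_sum)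
  qed
  have QM: "(\<integral>\<^sup>+\<omega>. ennreal (Q l \<omega> ^ k) \<partial>M) \<le> ennreal (b l ^ k)" for l
  proof -
    obtain f' where fd: "\<And>r. (F l has_real_derivative f' r) (at r)" and f'c: "continuous_on UNIV f'"
      using C1_differentiable_on_UNIV_E[OF F[of l]] by blast
    have "2 ^ (k+1) * fact (2*k) * (4 * T * x l) ^ k \<le> (\<kappa> * x l) ^ k"
      unfolding \<kappa>_def by (rule two_power_fact_le_power) (use t x k in auto)
    also have "\<dots> \<le> b l ^ k" using \<kappa> x by (intro power_mono) (auto simp: b_def)
    finally have "2 ^ (k+1) * fact (2*k) * (4 * T * x l) ^ k \<le> b l ^ k" .
    then show ?thesis
      using stoch_coeff_degree_moment[where F=F and l=l, OF P nf t k A w[of l] fd f'c G fb]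
      unfolding Q_def x_def by (meson ennreal_leI order_trans)
  qed
  have "(\<integral>\<^sup>+\<omega>. (\<Sum>l. ennreal (Q l \<omega>)) ^ k \<partial>M) \<le> ennreal (suminf b ^ k)"
  proof (rule nn_integral_suminf_power_le[OF Qm Q _ _ k QM])
    show "0 < b l" for l unfolding b_def using \<kappa> x[of l] by (intro add_nonneg_pos) auto
    show "summable b"
      unfolding b_def x_def w_def by (intro summable_add summable_mult sb summable_geometric) simp
  qed
  moreover have "hs_sq s (stoch_coeff A F \<beta> t \<omega>) = (\<Sum>l. ennreal (Q l \<omega>))" for \<omega>
    unfolding hs_sq_def Q_def w_def by (simp add: sum_ennreal)
  ultimately show ?thesis by auto
qed

section \<open>Sobolev norms\<close>

lemma lam_ge_two: "1 \<le> l \<Longrightarrow> 2 \<le> lam l"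
proof -
  assume "1 \<le> l"
  then have "1 \<le> real l" by simp
  then have "1 * 2 \<le> real l * (real l + 1)" by (intro mult_mono) auto
  then show ?thesis by (simp add: lam_def)
qed

lemma sobolev_weight_le:
  assumes l: "1 \<le> l"
  shows "(1 + lam l) powr s \<le> 3 powr \<bar>s\<bar> * real l powr (2 * s)"
proof -
  have l1: "1 \<le> real l" using l by simp
  have lo: "real l powr 2 \<le> 1 + lam l" using l1
    by (simp add: lam_def power2_eq_square algebra_simps)
  have hi: "1 + lam l \<le> 3 * real l powr 2"
  proof -
    have "real l \<le> real l * real l" using l1 by (simp add: mult_le_cancel_left1)
    moreover have "1 \<le> real l * real l" using l1
      by (metis mult_mono one_le_numeral order.trans mult_1 zero_le_one)
    moreover have "1 + lam l = 1 + real l + real l * real l" by (simp add: lam_def algebra_simps)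
    moreover have "3 * real l powr 2 = 3 * (real l * real l)" using l1
      by (simp add: power2_eq_square)
    ultimately show ?thesis by linarith
  qed
  have lp: "0 < real l powr 2" using l1 by simp
  have e0: "(real l powr 2) powr s = real l powr (2 * s)" by (subst powr_powr) simp
  have e: "(real l ^ 2) powr s = real l powr (2 * s)" using e0 by simp
  show ?thesis
  proof (cases "0 \<le> s")
    case True
    have "(1 + lam l) powr s \<le> (3 * real l powr 2) powr s"
      using hi True by (intro powr_mono2) (auto simp: lam_def)
    also have "\<dots> = 3 powr s * real l powr (2 * s)" by (simp add: powr_mult e)
    also have "\<dots> \<le> 3 powr \<bar>s\<bar> * real l powr (2 * s)" using True by simp
    finally show ?thesis .
  next
    case False
    have "(1 + lam l) powr s \<le> (real l powr 2) powr s"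
      using lo False lp by (intro powr_mono2') auto
    also have "\<dots> = 1 * real l powr (2 * s)" by (simp add: e)
    also have "\<dots> \<le> 3 powr \<bar>s\<bar> * real l powr (2 * s)"
      by (intro mult_right_mono ge_one_powr_ge_zero) auto
    finally show ?thesis .
  qed
qed

lemma summable_sobolev_weighted:
  fixes A h :: "nat \<Rightarrow> real"
  assumes Ab: "\<forall>l>l0. A l \<le> C * real l powr (- \<alpha>)" and A: "\<forall>l. 0 \<le> A l" and C: "0 < C"
    and h: "\<And>l. 0 \<le> h l" and hb: "\<And>l. 1 \<le> l \<Longrightarrow> h l \<le> H * real l powr q"
    and e: "2 * s + q - \<alpha> < -1"
  shows "summable (\<lambda>l. (1 + lam l) powr s * A l * h l)"
proof (rule summable_comparison_test'[where N="Suc l0"])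
  let ?K = "3 powr \<bar>s\<bar> * C * H"
  show "summable (\<lambda>l. ?K * real l powr (2 * s + q - \<alpha>))"
    by (intro summable_mult) (simp add: summable_real_powr_iff e)
  show "norm ((1 + lam n) powr s * A n * h n) \<le> ?K * real n powr (2 * s + q - \<alpha>)"
    if n: "Suc l0 \<le> n" for n
  proof -
    from n have n1: "1 \<le> n" and nl: "n > l0" by auto
    have H: "0 \<le> H"
    proof -
      have "0 \<le> H * real n powr q" using h[of n] hb[OF n1] by linarith
      moreover have "0 < real n powr q" using n1 by simp
      ultimately show ?thesis by (simp add: zero_le_mult_iff)
    qed
    have "norm ((1 + lam n) powr s * A n * h n) = (1 + lam n) powr s * A n * h n"
      using A h by (simp add: abs_mult)
    also have "\<dots> \<le> (3 powr \<bar>s\<bar> * real n powr (2 * s)) * (C * real n powr (- \<alpha>))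
        * (H * real n powr q)"
      using sobolev_weight_le[OF n1, of s] Ab nl hb[OF n1] A h less_imp_le[OF C]
        by (intro mult_mono) auto
    also have "\<dots> = ?K * (real n powr (2 * s) * real n powr (- \<alpha>) * real n powr q)"
      by (simp add: algebra_simps)
    also have "real n powr (2 * s) * real n powr (- \<alpha>) * real n powr q
        = real n powr (2 * s + q - \<alpha>)"
      by (simp add: powr_add[symmetric] algebra_simps)
    finally show "norm ((1 + lam n) powr s * A n * h n) \<le> ?K * real n powr (2 * s + q - \<alpha>)" .
  qed
qed

lemma hs_sq_cong:
  assumes "\<And>l m. \<bar>m\<bar> \<le> int l \<Longrightarrow> f l m = g l m"
  shows "hs_sq s f = hs_sq s g"
  unfolding hs_sq_def using assms by (intro suminf_cong sum.cong) auto

lemma hs_sq_add_le: "hs_sq s (\<lambda>l m. f l m + g l m) \<le> 2 * hs_sq s f + 2 * hs_sq s g"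
proof -
  have pw: "ennreal ((1 + lam l) powr s * (cmod (f l m + g l m))\<^sup>2)
      \<le> 2 * ennreal ((1 + lam l) powr s * (cmod (f l m))\<^sup>2)
          + 2 * ennreal ((1 + lam l) powr s * (cmod (g l m))\<^sup>2)"
    for l m
  proof -
    have "(1 + lam l) powr s * (cmod (f l m + g l m))\<^sup>2
        \<le> 2 * ((1 + lam l) powr s * (cmod (f l m))\<^sup>2) + 2 * ((1 + lam l) powr s * (cmod (g l m))\<^sup>2)"
      using mult_left_mono[OF cmod_add_squared_le[of "f l m" "g l m"], of "(1 + lam l) powr s"]
      by (simp add: algebra_simps)
    then have "ennreal ((1 + lam l) powr s * (cmod (f l m + g l m))\<^sup>2)
        \<le> ennreal (2 * ((1 + lam l) powr s * (cmod (f l m))\<^sup>2)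
            + 2 * ((1 + lam l) powr s * (cmod (g l m))\<^sup>2))"
      by (rule ennreal_leI)
    also have "\<dots> = 2 * ennreal ((1 + lam l) powr s * (cmod (f l m))\<^sup>2)
        + 2 * ennreal ((1 + lam l) powr s * (cmod (g l m))\<^sup>2)"
      by (simp add: ennreal_plus ennreal_mult)
    finally show ?thesis .
  qed
  have "(\<Sum>m\<in>{- int l..int l}. ennreal ((1 + lam l) powr s * (cmod (f l m + g l m))\<^sup>2))
      \<le> 2 * (\<Sum>m\<in>{- int l..int l}. ennreal ((1 + lam l) powr s * (cmod (f l m))\<^sup>2))
        + 2 * (\<Sum>m\<in>{- int l..int l}. ennreal ((1 + lam l) powr s * (cmod (g l m))\<^sup>2))" for l
  proof -
    have "(\<Sum>m\<in>{- int l..int l}. ennreal ((1 + lam l) powr s * (cmod (f l m + g l m))\<^sup>2))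
        \<le> (\<Sum>m\<in>{- int l..int l}. 2 * ennreal ((1 + lam l) powr s * (cmod (f l m))\<^sup>2)
          + 2 * ennreal ((1 + lam l) powr s * (cmod (g l m))\<^sup>2))"
      by (rule sum_mono) (rule pw)
    then show ?thesis by (simp only: sum.distrib sum_distrib_left)
  qed
  then have "hs_sq s (\<lambda>l m. f l m + g l m)
      \<le> (\<Sum>l. 2 * (\<Sum>m\<in>{- int l..int l}. ennreal ((1 + lam l) powr s * (cmod (f l m))\<^sup>2))
        + 2 * (\<Sum>m\<in>{- int l..int l}. ennreal ((1 + lam l) powr s * (cmod (g l m))\<^sup>2)))"
    unfolding hs_sq_def by (intro suminf_le summableI)
  also have "\<dots> = 2 * hs_sq s f + 2 * hs_sq s g"
    unfolding hs_sq_def by (simp add: suminf_add[symmetric] summableI)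
  finally show ?thesis .
qed

lemma hs_sq_measurable:
  assumes "\<And>l m. \<bar>m\<bar> \<le> int l \<Longrightarrow> (\<lambda>\<omega>. f \<omega> l m) \<in> borel_measurable M"
  shows "(\<lambda>\<omega>. hs_sq s (f \<omega>)) \<in> borel_measurable M"
proof -
  have "(\<lambda>\<omega>. ennreal ((1 + lam l) powr s * (cmod (f \<omega> l m))\<^sup>2)) \<in> borel_measurable M"
    if "m \<in> {- int l..int l}" for l m
  proof -
    have [measurable]: "(\<lambda>\<omega>. f \<omega> l m) \<in> borel_measurable M" using that by (intro assms) auto
    show ?thesis by measurable
  qed
  then show ?thesis
    unfolding hs_sq_def by (intro borel_measurable_suminf_order borel_measurable_sum)
qed

lemma hs_sq_moment_le:
  fixes U Z :: "'a \<Rightarrow> nat \<Rightarrow> int \<Rightarrow> complex"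
  assumes P: "prob_space M"
    and U: "\<And>\<omega> l m. \<omega> \<in> space M \<Longrightarrow> \<bar>m\<bar> \<le> int l \<Longrightarrow> U \<omega> l m = D l m + Z \<omega> l m"
    and Zm: "\<And>l m. \<bar>m\<bar> \<le> int l \<Longrightarrow> (\<lambda>\<omega>. Z \<omega> l m) \<in> borel_measurable M"
    and ZB: "(\<integral>\<^sup>+\<omega>. hs_sq s (Z \<omega>) ^ k \<partial>M) \<le> ennreal B" and B: "0 \<le> B"
    and D: "hs_sq s D \<le> ennreal H" and H: "0 \<le> H"
  shows "(\<integral>\<^sup>+\<omega>. hs_sq s (U \<omega>) ^ k \<partial>M) \<le> ennreal (4 ^ k * (H ^ k + B))"
proof -
  interpret prob_space M by (rule P)
  have [measurable]: "(\<lambda>\<omega>. hs_sq s (Z \<omega>)) \<in> borel_measurable M" by (rule hs_sq_measurable[OF Zm])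
  have "(\<integral>\<^sup>+\<omega>. hs_sq s (U \<omega>) ^ k \<partial>M)
      \<le> (\<integral>\<^sup>+\<omega>. ennreal (4 ^ k * H ^ k) + ennreal (4 ^ k) * hs_sq s (Z \<omega>) ^ k \<partial>M)"
  proof (intro nn_integral_mono)
    fix \<omega> assume \<omega>: "\<omega> \<in> space M"
    have "hs_sq s (U \<omega>) = hs_sq s (\<lambda>l m. D l m + Z \<omega> l m)" by (rule hs_sq_cong) (rule U[OF \<omega>])
    also have "\<dots> \<le> 2 * hs_sq s D + 2 * hs_sq s (Z \<omega>)" by (rule hs_sq_add_le)
    also have "\<dots> \<le> 2 * ennreal H + 2 * hs_sq s (Z \<omega>)" using D
      by (intro add_mono mult_left_mono) auto
    finally have "hs_sq s (U \<omega>) ^ k \<le> (2 * ennreal H + 2 * hs_sq s (Z \<omega>)) ^ k"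
      by (rule power_mono_ennreal)
    also have "\<dots> \<le> 2 ^ k * ((2 * ennreal H) ^ k + (2 * hs_sq s (Z \<omega>)) ^ k)"
      by (rule power_add_le_two_power_ennreal)
    also have "\<dots> = 4 ^ k * ennreal H ^ k + 4 ^ k * hs_sq s (Z \<omega>) ^ k"
    proof -
      have "(2::ennreal) ^ k * 2 ^ k = 4 ^ k" by (simp add: power_mult_distrib[symmetric])
      then show ?thesis by (simp add: power_mult_distrib distrib_left mult.assoc[symmetric])
    qed
    also have "\<dots> = ennreal (4 ^ k * H ^ k) + ennreal (4 ^ k) * hs_sq s (Z \<omega>) ^ k"
    proof -
      have "ennreal (4 ^ k) = 4 ^ k" by (simp add: ennreal_power[symmetric])
      then show ?thesis using H by (simp add: ennreal_power ennreal_mult)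
    qed
    finally show "hs_sq s (U \<omega>) ^ k \<le> ennreal (4 ^ k * H ^ k)
        + ennreal (4 ^ k) * hs_sq s (Z \<omega>) ^ k" .
  qed
  also have "\<dots> = ennreal (4 ^ k * H ^ k) + ennreal (4 ^ k) * (\<integral>\<^sup>+\<omega>. hs_sq s (Z \<omega>) ^ k \<partial>M)"
    by (simp add: nn_integral_add nn_integral_cmult emeasure_space_1)
  also have "\<dots> \<le> ennreal (4 ^ k * H ^ k) + ennreal (4 ^ k) * ennreal B"
    using ZB by (intro add_mono mult_left_mono) auto
  also have "\<dots> = ennreal (4 ^ k * (H ^ k + B))"
    using H B by (simp add: ennreal_mult[symmetric] ennreal_plus[symmetric] distrib_left del:
        ennreal_plus)
  finally show ?thesis .
qed

lemma hs_sq_le_combination: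
  fixes D v1 v2 :: "nat \<Rightarrow> int \<Rightarrow> complex"
  assumes pt: "\<And>l m. m \<in> {- int l..int l} \<Longrightarrow> (1 + lam l) powr s * (cmod (D l m))\<^sup>2
      \<le> a * ((1 + lam l) powr s1 * (cmod (v1 l m))\<^sup>2)
          + b * ((1 + lam l) powr s2 * (cmod (v2 l m))\<^sup>2)"
    and a: "0 \<le> a" and b: "0 \<le> b" and f1: "hs_sq s1 v1 < \<infinity>" and f2: "hs_sq s2 v2 < \<infinity>"
  shows "hs_sq s D
     \<le> ennreal (a * (hs_norm s1 v1)\<^sup>2 + b * (hs_norm s2 v2)\<^sup>2)"
proof -
  have fin: "hs_sq s' v = ennreal ((hs_norm s' v)\<^sup>2)" if "hs_sq s' v < \<infinity>" for s' v
    using that by (simp add: hs_norm_def)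
  have "hs_sq s D
     \<le> (\<Sum>l. ennreal a * (\<Sum>m\<in>{- int l..int l}. ennreal ((1 + lam l) powr s1 * (cmod (v1 l m))\<^sup>2))
            + ennreal b * (\<Sum>m\<in>{- int l..int l}. ennreal ((1 + lam l) powr s2 * (cmod (v2 l m))\<^sup>2)))"
    unfolding hs_sq_def
  proof (intro suminf_le summableI)
    fix l
    have "(\<Sum>m\<in>{- int l..int l}. ennreal ((1 + lam l) powr s * (cmod (D l m))\<^sup>2))
      \<le> (\<Sum>m\<in>{- int l..int l}. ennreal a * ennreal ((1 + lam l) powr s1 * (cmod (v1 l m))\<^sup>2)
            + ennreal b * ennreal ((1 + lam l) powr s2 * (cmod (v2 l m))\<^sup>2))"
    proof (intro sum_mono)
      fix m assume m: "m \<in> {- int l..int l}"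
      have "ennreal ((1 + lam l) powr s * (cmod (D l m))\<^sup>2)
          \<le> ennreal (a * ((1 + lam l) powr s1 * (cmod (v1 l m))\<^sup>2)
              + b * ((1 + lam l) powr s2 * (cmod (v2 l m))\<^sup>2))"
        by (rule ennreal_leI[OF pt[OF m]])
      also have "\<dots> = ennreal a * ennreal ((1 + lam l) powr s1 * (cmod (v1 l m))\<^sup>2)
            + ennreal b * ennreal ((1 + lam l) powr s2 * (cmod (v2 l m))\<^sup>2)"
        using a b by (simp add: ennreal_plus ennreal_mult)
      finally show "ennreal ((1 + lam l) powr s * (cmod (D l m))\<^sup>2)
          \<le> ennreal a * ennreal ((1 + lam l) powr s1 * (cmod (v1 l m))\<^sup>2)
            + ennreal b * ennreal ((1 + lam l) powr s2 * (cmod (v2 l m))\<^sup>2)" .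
    qed
    then show "(\<Sum>m\<in>{- int l..int l}. ennreal ((1 + lam l) powr s * (cmod (D l m))\<^sup>2))
     \<le> ennreal a * (\<Sum>m\<in>{- int l..int l}. ennreal ((1 + lam l) powr s1 * (cmod (v1 l m))\<^sup>2))
            + ennreal b * (\<Sum>m\<in>{- int l..int l}. ennreal ((1 + lam l) powr s2 * (cmod (v2 l m))\<^sup>2))"
      unfolding sum.distrib sum_distrib_left .
  qed
  also have "\<dots> = ennreal a * hs_sq s1 v1 + ennreal b * hs_sq s2 v2"
    unfolding hs_sq_def by (simp add: suminf_add[symmetric] summableI)
  also have "\<dots> = ennreal (a * (hs_norm s1 v1)\<^sup>2 + b * (hs_norm s2 v2)\<^sup>2)"
    using a b by (simp add: fin[OF f1] fin[OF f2] ennreal_plus ennreal_mult)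
  finally show ?thesis .
qed

section \<open>The mild solution\<close>

text \<open>At \<open>l = 0\<close> the kernel is \<open>t - r\<close>, the limit of \<open>sin ((t - r) a) / a\<close> as \<open>a \<rightarrow> 0\<close>.\<close>
definition sin_kernel :: "real \<Rightarrow> nat \<Rightarrow> real \<Rightarrow> real" where
  "sin_kernel t l =
     (if l = 0 then (\<lambda>r. t - r) else (\<lambda>r. sin ((t - r) * sqrt (lam l)) / sqrt (lam l)))"

definition cos_kernel :: "real \<Rightarrow> nat \<Rightarrow> real \<Rightarrow> real" where
  "cos_kernel t l = (\<lambda>r. cos ((t - r) * sqrt (lam l)))"

definition free_u1 :: "(nat \<Rightarrow> int \<Rightarrow> complex) \<Rightarrow> (nat \<Rightarrow> int \<Rightarrow> complex) \<Rightarrow> real \<Rightarrow> nat \<Rightarrow> int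
    \<Rightarrow> complex" where
  "free_u1 v1 v2 t l m =
     complex_of_real (cos (t * sqrt (lam l))) * v1 l m
         + complex_of_real (sin_kernel t l 0) * v2 l m"

definition free_u2 :: "(nat \<Rightarrow> int \<Rightarrow> complex) \<Rightarrow> (nat \<Rightarrow> int \<Rightarrow> complex) \<Rightarrow> real \<Rightarrow> nat \<Rightarrow> int
    \<Rightarrow> complex" where
  "free_u2 v1 v2 t l m =
     complex_of_real (- sqrt (lam l) * sin (t * sqrt (lam l))) * v1 l m
     + complex_of_real (cos (t * sqrt (lam l))) * v2 l m"

lemma sin_kernel_C1_differentiable: "sin_kernel t l C1_differentiable_on UNIV"
proof (cases "l = 0")
  case True
  then have "sin_kernel t l = (\<lambda>r. t - r)" by (simp add: sin_kernel_def)
  moreover have "((\<lambda>r. t - r) has_real_derivative - 1) (at r)" for r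
    by (auto intro!: derivative_eq_intros)
  ultimately show ?thesis unfolding C1_differentiable_on_def
      has_real_derivative_iff_has_vector_derivative[symmetric] by (intro exI[of _ "\<lambda>_. - 1"]) simp
next
  case False
  define a where "a = sqrt (lam l)"
  have "0 < a" using False lam_ge_two[of l] by (simp add: a_def)
  then have "((\<lambda>r. sin ((t - r) * a) / a) has_real_derivative - cos ((t - r) * a)) (at r)" for r
    by (auto intro!: derivative_eq_intros)
  moreover have "sin_kernel t l = (\<lambda>r. sin ((t - r) * a) / a)" using False
    by (simp add: sin_kernel_def a_def)
  ultimately show ?thesis unfolding C1_differentiable_on_def
      has_real_derivative_iff_has_vector_derivative[symmetric]
    by (intro exI[of _ "\<lambda>r. - cos ((t - r) * a)"]) (auto intro!: continuous_intros)
qed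

lemma cos_kernel_C1_differentiable: "cos_kernel t l C1_differentiable_on UNIV"
proof -
  have "((\<lambda>r. cos ((t - r) * sqrt (lam l))) has_real_derivative sqrt (lam l)
      * sin ((t - r) * sqrt (lam l))) (at r)"
    for r by (auto intro!: derivative_eq_intros)
  then show ?thesis unfolding C1_differentiable_on_def
      has_real_derivative_iff_has_vector_derivative[symmetric] cos_kernel_def
    by (intro exI[of _ "\<lambda>r. sqrt (lam l) * sin ((t - r) * sqrt (lam l))"])
        (auto intro!: continuous_intros)
qed

lemma abs_sin_kernel_le:
  assumes "r \<in> {0..t}" "t \<le> T"
  shows "\<bar>sin_kernel t l r\<bar> \<le> (if l = 0 then T else 1 / sqrt (lam l))"
proof (cases "l = 0")
  case False
  then have a: "0 < sqrt (lam l)" using lam_ge_two[of l] by simp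
  have "\<bar>sin ((t - r) * sqrt (lam l))\<bar> / sqrt (lam l) \<le> 1 / sqrt (lam l)"
    using a by (intro divide_right_mono) auto
  then show ?thesis using False a by (simp add: sin_kernel_def abs_div)
qed (use assms in \<open>simp add: sin_kernel_def\<close>)

lemma abs_cos_kernel_le: "\<bar>cos_kernel t l r\<bar> \<le> 1"
  by (simp add: cos_kernel_def)

lemma noise_coeff_at_zero:
  assumes nf: "noise_family M T \<beta>" and \<omega>: "\<omega> \<in> space M" and T: "0 \<le> T" and m: "\<bar>m\<bar> \<le> int l"
  shows "noise_coeff A \<beta> l m 0 \<omega> = 0"
proof -
  have "(1, l, nat \<bar>m\<bar>) \<in> bm_index" using m by (auto simp: bm_index_def)
  then have "\<beta> (1, l, nat \<bar>m\<bar>) 0 \<omega> = 0" using noise_family_path[OF nf _ \<omega> T] by blast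
  moreover have "real_of_int (sgn m) * \<beta> (2, l, nat \<bar>m\<bar>) 0 \<omega> = 0"
  proof (cases "m = 0")
    case False
    then have "(2, l, nat \<bar>m\<bar>) \<in> bm_index" using m by (auto simp: bm_index_def)
    then show ?thesis using noise_family_path[OF nf _ \<omega> T] by simp
  qed simp
  ultimately show ?thesis by (simp add: noise_coeff_eq Complex_eq)
qed

lemma sol_u1_eq:
  assumes nf: "noise_family M T \<beta>" and \<omega>: "\<omega> \<in> space M" and t: "0 \<le> t" "t \<le> T" and m: "\<bar>m\<bar> \<le> int l"
  shows "sol_u1 A \<beta> v1 v2 t \<omega> l m = free_u1 v1 v2 t l m + stoch_coeff A (sin_kernel t) \<beta> t \<omega> l m"
proof -
  obtain f' where fd: "\<And>r. (sin_kernel t l has_real_derivative f' r) (at r)"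
    and f'c: "continuous_on UNIV f'"
    using C1_differentiable_on_UNIV_E[OF sin_kernel_C1_differentiable[of t l]] by blast
  have "sol_u1 A \<beta> v1 v2 t \<omega> l m
      = free_u1 v1 v2 t l m + det_stoch_int (sin_kernel t l) (\<lambda>r. noise_coeff A \<beta> l m r \<omega>) t"
  proof (cases "l = 0")
    case True
    have "deriv (\<lambda>r. t - r) r = - 1" for r by (auto intro!: DERIV_imp_deriv derivative_eq_intros)
    moreover have "noise_coeff A \<beta> 0 0 0 \<omega> = 0" using noise_coeff_at_zero[OF nf \<omega>, of 0 0] t by simp
    ultimately show ?thesis
      using True m by (simp add: sol_u1_def free_u1_def sin_kernel_def det_stoch_int_def lam_def)
  qed (use m in \<open>simp add: sol_u1_def free_u1_def sin_kernel_def det_stoch_int_def\<close>)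
  also have "\<dots> = free_u1 v1 v2 t l m + stoch_coeff A (sin_kernel t) \<beta> t \<omega> l m"
    using det_stoch_int_noise_coeff[where F="sin_kernel t", OF nf \<omega> t(2) m fd f'c] by simp
  finally show ?thesis .
qed

lemma sol_u2_eq:
  assumes nf: "noise_family M T \<beta>" and \<omega>: "\<omega> \<in> space M" and t: "0 \<le> t" "t \<le> T" and m: "\<bar>m\<bar> \<le> int l"
  shows "sol_u2 A \<beta> v1 v2 t \<omega> l m = free_u2 v1 v2 t l m + stoch_coeff A (cos_kernel t) \<beta> t \<omega> l m"
proof -
  obtain f' where fd: "\<And>r. (cos_kernel t l has_real_derivative f' r) (at r)"
    and f'c: "continuous_on UNIV f'"
    using C1_differentiable_on_UNIV_E[OF cos_kernel_C1_differentiable[of t l]] by blast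
  have "sol_u2 A \<beta> v1 v2 t \<omega> l m
      = free_u2 v1 v2 t l m + det_stoch_int (cos_kernel t l) (\<lambda>r. noise_coeff A \<beta> l m r \<omega>) t"
  proof (cases "l = 0")
    case True
    have "deriv (\<lambda>r. 1) r = 0" for r by (auto intro!: DERIV_imp_deriv derivative_eq_intros)
    moreover have "noise_coeff A \<beta> 0 0 0 \<omega> = 0" using noise_coeff_at_zero[OF nf \<omega>, of 0 0] t by simp
    ultimately show ?thesis
      using True m by (simp add: sol_u2_def free_u2_def cos_kernel_def det_stoch_int_def lam_def)
  qed (use m in \<open>simp add: sol_u2_def free_u2_def cos_kernel_def det_stoch_int_def\<close>)
  also have "\<dots> = free_u2 v1 v2 t l m + stoch_coeff A (cos_kernel t) \<beta> t \<omega> l m"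
    using det_stoch_int_noise_coeff[where F="cos_kernel t", OF nf \<omega> t(2) m fd f'c] by simp
  finally show ?thesis .
qed

lemma free_u1_weighted_le:
  assumes t: "0 \<le> t" "t \<le> T"
  shows "(1 + lam l) powr s * (cmod (free_u1 v1 v2 t l m))\<^sup>2
     \<le> (4 + 2 * T\<^sup>2) * ((1 + lam l) powr s * (cmod (v1 l m))\<^sup>2)
       + (4 + 2 * T\<^sup>2) * ((1 + lam l) powr (s - 1) * (cmod (v2 l m))\<^sup>2)"
proof (cases "l = 0")
  case True
  have "(cmod (free_u1 v1 v2 t l m))\<^sup>2 \<le> 2 * 1\<^sup>2 * (cmod (v1 l m))\<^sup>2 + 2 * t\<^sup>2 * (cmod (v2 l m))\<^sup>2"
    using cmod_of_real_combination_squared_le[of 1 "v1 l m" t "v2 l m"] True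
    by (simp add: free_u1_def sin_kernel_def lam_def)
  also have "\<dots> \<le> (4 + 2 * T\<^sup>2) * (cmod (v1 l m))\<^sup>2 + (4 + 2 * T\<^sup>2) * (cmod (v2 l m))\<^sup>2"
  proof (intro add_mono mult_right_mono)
    have "t\<^sup>2 \<le> T\<^sup>2" using t by (intro power_mono) auto
    then show "2 * t\<^sup>2 \<le> 4 + 2 * T\<^sup>2" by simp
  qed auto
  finally show ?thesis using True by (simp add: lam_def)
next
  case False
  define L where "L = 1 + lam l"
  define a where "a = sqrt (lam l)"
  have lg: "2 \<le> lam l" using False lam_ge_two[of l] by simp
  have L: "0 < L" using lg by (simp add: L_def)
  have a2: "a\<^sup>2 = lam l" using lg by (simp add: a_def)
  have "(cmod (free_u1 v1 v2 t l m))\<^sup>2 \<le> 2 * (cos (t * a))\<^sup>2 * (cmod (v1 l m))\<^sup>2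
      + 2 * (sin (t * a) / a)\<^sup>2 * (cmod (v2 l m))\<^sup>2"
  proof -
    have "free_u1 v1 v2 t l m = complex_of_real (cos (t * a)) * v1 l m
        + complex_of_real (sin (t * a) / a) * v2 l m"
      using False by (simp add: free_u1_def sin_kernel_def a_def)
    then show ?thesis by (simp only: cmod_of_real_combination_squared_le)
  qed
  also have "\<dots> \<le> 2 * (cmod (v1 l m))\<^sup>2 + 2 / lam l * (cmod (v2 l m))\<^sup>2"
  proof (intro add_mono mult_right_mono)
    have "(sin (t * a) / a)\<^sup>2 = (sin (t * a))\<^sup>2 / lam l" by (simp add: power_divide a2)
    also have "\<dots> \<le> 1 / lam l" using lg by (intro divide_right_mono) (auto simp: abs_square_le_1)
    finally show "2 * (sin (t * a) / a)\<^sup>2 \<le> 2 / lam l" by simp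
  qed (auto simp: abs_square_le_1)
  finally have "L powr s * (cmod (free_u1 v1 v2 t l m))\<^sup>2
      \<le> L powr s * (2 * (cmod (v1 l m))\<^sup>2 + 2 / lam l * (cmod (v2 l m))\<^sup>2)"
    by (rule mult_left_mono) simp
  also have "\<dots> = 2 * (L powr s * (cmod (v1 l m))\<^sup>2)
      + (2 * (L / lam l)) * (L powr (s - 1) * (cmod (v2 l m))\<^sup>2)"
    using powr_eq_powr_diff_one_mult[OF L, of s] by (simp add: algebra_simps)
  also have "\<dots> \<le> (4 + 2 * T\<^sup>2) * (L powr s * (cmod (v1 l m))\<^sup>2)
      + (4 + 2 * T\<^sup>2) * (L powr (s - 1) * (cmod (v2 l m))\<^sup>2)"
  proof (intro add_mono mult_right_mono)
    have "L / lam l \<le> 2" using lg by (simp add: L_def divide_le_eq)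
    then show "2 * (L / lam l) \<le> 4 + 2 * T\<^sup>2" by (simp add: add_increasing2)
  qed simp_all
  finally show ?thesis by (simp add: L_def)
qed

lemma free_u2_weighted_le:
  "(1 + lam l) powr s * (cmod (free_u2 v1 v2 t l m))\<^sup>2
     \<le> 2 * ((1 + lam l) powr (s + 1) * (cmod (v1 l m))\<^sup>2)
         + 2 * ((1 + lam l) powr s * (cmod (v2 l m))\<^sup>2)"
proof (cases "l = 0")
  case True
  then show ?thesis by (simp add: free_u2_def lam_def)
next
  case False
  define L where "L = 1 + lam l"
  define a where "a = sqrt (lam l)"
  have lg: "2 \<le> lam l" using False lam_ge_two[of l] by simp
  have L: "0 < L" using lg by (simp add: L_def)
  have a2: "a\<^sup>2 = lam l" using lg by (simp add: a_def)
  have "(cmod (free_u2 v1 v2 t l m))\<^sup>2 \<le> 2 * (- a * sin (t * a))\<^sup>2 * (cmod (v1 l m))\<^sup>2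
      + 2 * (cos (t * a))\<^sup>2 * (cmod (v2 l m))\<^sup>2"
  proof -
    have "free_u2 v1 v2 t l m = complex_of_real (- a * sin (t * a)) * v1 l m
        + complex_of_real (cos (t * a)) * v2 l m"
      by (simp add: free_u2_def a_def)
    then show ?thesis by (simp only: cmod_of_real_combination_squared_le)
  qed
  also have "\<dots> \<le> 2 * lam l * (cmod (v1 l m))\<^sup>2 + 2 * (cmod (v2 l m))\<^sup>2"
  proof (intro add_mono mult_right_mono)
    have "(- a * sin (t * a))\<^sup>2 = lam l * (sin (t * a))\<^sup>2" by (simp add: power_mult_distrib a2)
    also have "\<dots> \<le> lam l * 1" using lg by (intro mult_left_mono) (auto simp: abs_square_le_1)
    finally show "2 * (- a * sin (t * a))\<^sup>2 \<le> 2 * lam l" by simp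
  qed (auto simp: abs_square_le_1)
  finally have "L powr s * (cmod (free_u2 v1 v2 t l m))\<^sup>2
      \<le> L powr s * (2 * lam l * (cmod (v1 l m))\<^sup>2 + 2 * (cmod (v2 l m))\<^sup>2)"
    by (rule mult_left_mono) simp
  also have "\<dots> = 2 * ((L powr s * lam l) * (cmod (v1 l m))\<^sup>2) + 2 * (L powr s * (cmod (v2 l m))\<^sup>2)"
    by (simp add: algebra_simps)
  also have "\<dots> \<le> 2 * (L powr (s + 1) * (cmod (v1 l m))\<^sup>2) + 2 * (L powr s * (cmod (v2 l m))\<^sup>2)"
  proof (intro add_right_mono mult_left_mono mult_right_mono)
    have "L powr s * lam l \<le> L powr s * L" by (intro mult_left_mono) (auto simp: L_def)
    also have "\<dots> = L powr (s + 1)" using powr_eq_powr_diff_one_mult[OF L, of "s + 1"] by simp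
    finally show "L powr s * lam l \<le> L powr (s + 1)" .
  qed auto
  finally show ?thesis by (simp add: L_def)
qed

lemma hs_sq_free_u1_le:
  assumes "0 \<le> t" "t \<le> T" "hs_sq s v1 < \<infinity>" "hs_sq (s - 1) v2 < \<infinity>"
  shows "hs_sq s (free_u1 v1 v2 t) \<le> ennreal ((4 + 2 * T\<^sup>2)
      * ((hs_norm s v1)\<^sup>2 + (hs_norm (s - 1) v2)\<^sup>2))"
proof -
  have "hs_sq s (free_u1 v1 v2 t)
      \<le> ennreal ((4 + 2 * T\<^sup>2) * (hs_norm s v1)\<^sup>2 + (4 + 2 * T\<^sup>2) * (hs_norm (s - 1) v2)\<^sup>2)"
    by (rule hs_sq_le_combination) (use assms free_u1_weighted_le in auto)
  then show ?thesis by (simp add: distrib_left)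
qed

lemma hs_sq_free_u2_le:
  assumes "hs_sq (s + 1) v1 < \<infinity>" "hs_sq s v2 < \<infinity>"
  shows "hs_sq s (free_u2 v1 v2 t) \<le> ennreal (2 * ((hs_norm (s + 1) v1)\<^sup>2 + (hs_norm s v2)\<^sup>2))"
proof -
  have "hs_sq s (free_u2 v1 v2 t) \<le> ennreal (2 * (hs_norm (s + 1) v1)\<^sup>2 + 2 * (hs_norm s v2)\<^sup>2)"
    by (rule hs_sq_le_combination) (use assms free_u2_weighted_le in auto)
  then show ?thesis by (simp add: distrib_left)
qed

lemma moment_bound_of_decomposition:
  fixes U :: "(nat \<Rightarrow> int \<Rightarrow> complex) \<Rightarrow> (nat \<Rightarrow> int \<Rightarrow> complex) \<Rightarrow> 'a \<Rightarrow> nat \<Rightarrow> int \<Rightarrow> complex"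
    and D :: "(nat \<Rightarrow> int \<Rightarrow> complex) \<Rightarrow> (nat \<Rightarrow> int \<Rightarrow> complex) \<Rightarrow> nat \<Rightarrow> int \<Rightarrow> complex"
  assumes P: "prob_space M" and nf: "noise_family M T \<beta>" and t: "0 \<le> t" "t \<le> T" and k: "1 \<le> k"
    and A: "\<And>l. 0 \<le> A l"
    and F: "\<And>l. F l C1_differentiable_on UNIV"
    and G: "\<And>l. 0 < G l" and fb: "\<And>l r. r \<in> {0..t} \<Longrightarrow> \<bar>F l r\<bar> \<le> G l"
    and sb: "summable (\<lambda>l. (1 + lam l) powr s * A l * (2 * real l + 1) * (G l)\<^sup>2)"
    and U0: "\<And>v1 v2 \<omega> l m. int l < \<bar>m\<bar> \<Longrightarrow> U v1 v2 \<omega> l m = 0"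
    and U: "\<And>v1 v2 \<omega> l m. adm v1 v2 \<Longrightarrow> \<omega> \<in> space M \<Longrightarrow> \<bar>m\<bar> \<le> int l
      \<Longrightarrow> U v1 v2 \<omega> l m = D v1 v2 l m + stoch_coeff A F \<beta> t \<omega> l m"
    and c: "0 \<le> c" and Na: "\<And>v1. 0 \<le> Na v1" and Nb: "\<And>v2. 0 \<le> Nb v2"
    and D: "\<And>v1 v2. adm v1 v2 \<Longrightarrow> hs_sq s (D v1 v2) \<le> ennreal (c * ((Na v1)\<^sup>2 + (Nb v2)\<^sup>2))"
  shows "\<exists>K. \<forall>v1 v2. adm v1 v2 \<longrightarrow>
     (\<forall>l m. (\<lambda>\<omega>. U v1 v2 \<omega> l m) \<in> borel_measurable M)
     \<and> (\<integral>\<^sup>+\<omega>. hs_sq s (U v1 v2 \<omega>) ^ k \<partial>M) \<le> ennreal ((K * (1 + Na v1 + Nb v2)) ^ (2 * k))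
     \<and> (\<integral>\<^sup>+\<omega>. hs_sq s (U v1 v2 \<omega>) ^ k \<partial>M) < \<infinity>"
proof -
  have Zm: "(\<lambda>\<omega>. stoch_coeff A F \<beta> t \<omega> l m) \<in> borel_measurable M" if "\<bar>m\<bar> \<le> int l" for l m
    by (rule stoch_coeff_measurable[where F=F and l=l and A=A, OF P nf t that A F G fb])
  obtain B0 where B0: "(\<integral>\<^sup>+\<omega>. hs_sq s (stoch_coeff A F \<beta> t \<omega>) ^ k \<partial>M) \<le> ennreal B0"
    using stoch_coeff_hs_moment[OF P nf t k A F G fb sb] by blast
  define B where "B = max B0 0"
  have B: "0 \<le> B" by (simp add: B_def)
  have ZB: "(\<integral>\<^sup>+\<omega>. hs_sq s (stoch_coeff A F \<beta> t \<omega>) ^ k \<partial>M) \<le> ennreal B"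
    using B0 by (rule order_trans) (simp add: B_def ennreal_leI)
  show ?thesis
  proof (intro exI[of _ "2 * (1 + c + B)"] allI impI)
    fix v1 v2 assume adm: "adm v1 v2"
    define H where "H = c * ((Na v1)\<^sup>2 + (Nb v2)\<^sup>2)"
    have H: "0 \<le> H" unfolding H_def using c by (intro mult_nonneg_nonneg) auto
    have Um: "(\<lambda>\<omega>. U v1 v2 \<omega> l m) \<in> borel_measurable M" for l m
    proof (cases "\<bar>m\<bar> \<le> int l")
      case True
      have [measurable]: "(\<lambda>\<omega>. stoch_coeff A F \<beta> t \<omega> l m) \<in> borel_measurable M"
        by (rule Zm[OF True])
      have "(\<lambda>\<omega>. D v1 v2 l m + stoch_coeff A F \<beta> t \<omega> l m) \<in> borel_measurable M" by measurable
      then show ?thesis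
        by (subst measurable_cong[where g="\<lambda>\<omega>. D v1 v2 l m + stoch_coeff A F \<beta> t \<omega> l m"])
          (auto simp: U[OF adm] True)
    qed (simp add: U0)
    have "(\<integral>\<^sup>+\<omega>. hs_sq s (U v1 v2 \<omega>) ^ k \<partial>M) \<le> ennreal (4 ^ k * (H ^ k + B))"
      by (rule hs_sq_moment_le[OF P U[OF adm] Zm ZB B D[OF adm, folded H_def] H])
    also have "\<dots> \<le> ennreal ((2 * (1 + c + B) * (1 + Na v1 + Nb v2)) ^ (2 * k))"
      by (intro ennreal_leI moment_bound_le_norm_power[OF c B Na Nb H _ k]) (simp add: H_def)
    finally show "(\<forall>l m. (\<lambda>\<omega>. U v1 v2 \<omega> l m) \<in> borel_measurable M)
      \<and> (\<integral>\<^sup>+\<omega>. hs_sq s (U v1 v2 \<omega>) ^ k \<partial>M)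
          \<le> ennreal ((2 * (1 + c + B) * (1 + Na v1 + Nb v2)) ^ (2 * k))
      \<and> (\<integral>\<^sup>+\<omega>. hs_sq s (U v1 v2 \<omega>) ^ k \<partial>M) < \<infinity>"
      using Um by (auto intro: le_less_trans)
  qed
qed

lemma sol_u1_moment_bound:
  assumes P: "prob_space M" and T: "0 < T" and nf: "noise_family M T \<beta>" and A: "\<forall>l. 0 \<le> A l"
    and C: "0 < C" and Ab: "\<forall>l>l0. A l \<le> C * real l powr (- \<alpha>)"
    and t: "t \<in> {0..T}" and k: "1 \<le> k" and s: "s < \<alpha> / 2"
  shows "\<exists>K::real. \<forall>v1 v2. real_sph_coeffs v1 \<and> real_sph_coeffs v2 \<and>
            hs_sq s v1 < \<infinity> \<and> hs_sq (s - 1) v2 < \<infinity> \<longrightarrow>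
          (\<forall>l m. (\<lambda>\<omega>. sol_u1 A \<beta> v1 v2 t \<omega> l m) \<in> borel_measurable M) \<and>
          (\<integral>\<^sup>+\<omega>. hs_sq s (sol_u1 A \<beta> v1 v2 t \<omega>) ^ k \<partial>M)
             \<le> ennreal ((K * (1 + hs_norm s v1 + hs_norm (s - 1) v2)) ^ (2 * k)) \<and>
          (\<integral>\<^sup>+\<omega>. hs_sq s (sol_u1 A \<beta> v1 v2 t \<omega>) ^ k \<partial>M) < \<infinity>"
proof -
  define G where "G l = (if l = 0 then T else 1 / sqrt (lam l))" for l
  have G: "0 < G l" for l using T lam_ge_two[of l] by (auto simp: G_def)
  have "summable (\<lambda>l. (1 + lam l) powr s * A l * ((2 * real l + 1) * (G l)\<^sup>2))"
  proof (rule summable_sobolev_weighted[OF Ab A C])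
    show "(2 * real l + 1) * (G l)\<^sup>2 \<le> 2 * real l powr (- 1)" if l: "1 \<le> l" for l
    proof -
      have lg: "2 \<le> lam l" using lam_ge_two[OF l] .
      have lp: "0 < real l" using l by simp
      have "(2 * real l + 1) * (G l)\<^sup>2 = (2 * real l + 1) / lam l"
        using l lg by (simp add: G_def power_divide)
      also have "\<dots> \<le> 2 / real l"
        using lp lg by (simp add: divide_simps lam_def algebra_simps)
      also have "\<dots> = 2 * real l powr (- 1)" using lp by (simp add: powr_minus divide_inverse)
      finally show ?thesis .
    qed
  qed (use s in auto)
  then have sb: "summable (\<lambda>l. (1 + lam l) powr s * A l * (2 * real l + 1) * (G l)\<^sup>2)"
    by (simp add: mult.assoc)
  show ?thesis
  proof (rule moment_bound_of_decomposition[where U="\<lambda>v1 v2. sol_u1 A \<beta> v1 v2 t"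
        and D="\<lambda>v1 v2. free_u1 v1 v2 t" and F="sin_kernel t" and Na="hs_norm s"
          and Nb="hs_norm (s - 1)",
        OF P nf _ _ k _ sin_kernel_C1_differentiable G _ sb])
    show "\<bar>sin_kernel t l r\<bar> \<le> G l" if "r \<in> {0..t}" for l r
      using abs_sin_kernel_le[OF that] t by (simp add: G_def)
    show "hs_sq s (free_u1 v1 v2 t) \<le> ennreal ((4 + 2 * T\<^sup>2)
        * ((hs_norm s v1)\<^sup>2 + (hs_norm (s - 1) v2)\<^sup>2))"
      if "real_sph_coeffs v1 \<and> real_sph_coeffs v2 \<and> hs_sq s v1 < \<infinity> \<and> hs_sq (s - 1) v2 < \<infinity>" for v1 v2
      using hs_sq_free_u1_le that t by auto
    show "sol_u1 A \<beta> v1 v2 t \<omega> l m = 0" if "int l < \<bar>m\<bar>" for v1 v2 \<omega> l m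
      using that by (simp add: sol_u1_def)
    show "sol_u1 A \<beta> v1 v2 t \<omega> l m = free_u1 v1 v2 t l m + stoch_coeff A (sin_kernel t) \<beta> t \<omega> l m"
      if "\<omega> \<in> space M" "\<bar>m\<bar> \<le> int l" for v1 v2 \<omega> l m
      using sol_u1_eq[OF nf that(1) _ _ that(2)] t by simp
  qed (use t A in \<open>auto simp: hs_norm_def\<close>)
qed

lemma sol_u2_moment_bound:
  assumes P: "prob_space M" and nf: "noise_family M T \<beta>" and A: "\<forall>l. 0 \<le> A l"
    and C: "0 < C" and Ab: "\<forall>l>l0. A l \<le> C * real l powr (- \<alpha>)"
    and t: "t \<in> {0..T}" and k: "1 \<le> k" and s: "s < \<alpha> / 2 - 1"
  shows "\<exists>K::real. \<forall>v1 v2. real_sph_coeffs v1 \<and> real_sph_coeffs v2 \<and>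
            hs_sq (s + 1) v1 < \<infinity> \<and> hs_sq s v2 < \<infinity> \<longrightarrow>
          (\<forall>l m. (\<lambda>\<omega>. sol_u2 A \<beta> v1 v2 t \<omega> l m) \<in> borel_measurable M) \<and>
          (\<integral>\<^sup>+\<omega>. hs_sq s (sol_u2 A \<beta> v1 v2 t \<omega>) ^ k \<partial>M)
             \<le> ennreal ((K * (1 + hs_norm (s + 1) v1 + hs_norm s v2)) ^ (2 * k)) \<and>
          (\<integral>\<^sup>+\<omega>. hs_sq s (sol_u2 A \<beta> v1 v2 t \<omega>) ^ k \<partial>M) < \<infinity>"
proof -
  have "summable (\<lambda>l. (1 + lam l) powr s * A l * (2 * real l + 1))"
    by (rule summable_sobolev_weighted[OF Ab A C, where H=3 and q=1]) (use s in auto)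
  then have sb: "summable (\<lambda>l. (1 + lam l) powr s * A l * (2 * real l + 1) * 1\<^sup>2)"
    by simp
  show ?thesis
  proof (rule moment_bound_of_decomposition[where U="\<lambda>v1 v2. sol_u2 A \<beta> v1 v2 t"
        and D="\<lambda>v1 v2. free_u2 v1 v2 t" and F="cos_kernel t" and G="\<lambda>_. 1"
        and Na="hs_norm (s + 1)" and Nb="hs_norm s", OF P nf _ _ k _ cos_kernel_C1_differentiable
            _ _ sb])
    show "hs_sq s (free_u2 v1 v2 t) \<le> ennreal (2 * ((hs_norm (s + 1) v1)\<^sup>2 + (hs_norm s v2)\<^sup>2))"
      if "real_sph_coeffs v1 \<and> real_sph_coeffs v2 \<and> hs_sq (s + 1) v1 < \<infinity> \<and> hs_sq s v2 < \<infinity>" for v1 v2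
      using hs_sq_free_u2_le that by auto
    show "sol_u2 A \<beta> v1 v2 t \<omega> l m = 0" if "int l < \<bar>m\<bar>" for v1 v2 \<omega> l m
      using that by (simp add: sol_u2_def)
    show "sol_u2 A \<beta> v1 v2 t \<omega> l m = free_u2 v1 v2 t l m + stoch_coeff A (cos_kernel t) \<beta> t \<omega> l m"
      if "\<omega> \<in> space M" "\<bar>m\<bar> \<le> int l" for v1 v2 \<omega> l m
      using sol_u2_eq[OF nf that(1) _ _ that(2)] t by simp
  qed (use t A abs_cos_kernel_le in \<open>auto simp: hs_norm_def\<close>)
qed

theorem proposition3p3:
  fixes M :: "'a measure" and T :: real
    and \<beta> :: "nat \<times> nat \<times> nat \<Rightarrow> real \<Rightarrow> 'a \<Rightarrow> real"
    and A :: "nat \<Rightarrow> real" and l0 :: nat and \<alpha> C :: real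
  assumes "prob_space M" and "0 < T" and "noise_family M T \<beta>"
    and "\<forall>l. 0 \<le> A l"
    and "2 < \<alpha>" and "0 < C" and "\<forall>l>l0. A l \<le> C * real l powr (- \<alpha>)"
  shows
    "(\<forall>t\<in>{0..T}. \<forall>k::nat. 1 \<le> k \<longrightarrow> (\<forall>s::real. s < \<alpha> / 2 \<longrightarrow>
       (\<exists>K::real. \<forall>v1 v2. real_sph_coeffs v1 \<and> real_sph_coeffs v2 \<and>
            hs_sq s v1 < \<infinity> \<and> hs_sq (s - 1) v2 < \<infinity> \<longrightarrow>
          (\<forall>l m. (\<lambda>\<omega>. sol_u1 A \<beta> v1 v2 t \<omega> l m) \<in> borel_measurable M) \<and>
          (\<integral>\<^sup>+\<omega>. hs_sq s (sol_u1 A \<beta> v1 v2 t \<omega>) ^ k \<partial>M)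
             \<le> ennreal ((K * (1 + hs_norm s v1 + hs_norm (s - 1) v2)) ^ (2 * k)) \<and>
          (\<integral>\<^sup>+\<omega>. hs_sq s (sol_u1 A \<beta> v1 v2 t \<omega>) ^ k \<partial>M) < \<infinity>)))
   \<and>
    (\<forall>t\<in>{0..T}. \<forall>k::nat. 1 \<le> k \<longrightarrow> (\<forall>s::real. s < \<alpha> / 2 - 1 \<longrightarrow>
       (\<exists>K::real. \<forall>v1 v2. real_sph_coeffs v1 \<and> real_sph_coeffs v2 \<and>
            hs_sq (s + 1) v1 < \<infinity> \<and> hs_sq s v2 < \<infinity> \<longrightarrow>
          (\<forall>l m. (\<lambda>\<omega>. sol_u2 A \<beta> v1 v2 t \<omega> l m) \<in> borel_measurable M) \<and>
          (\<integral>\<^sup>+\<omega>. hs_sq s (sol_u2 A \<beta> v1 v2 t \<omega>) ^ k \<partial>M)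
             \<le> ennreal ((K * (1 + hs_norm (s + 1) v1 + hs_norm s v2)) ^ (2 * k)) \<and>
          (\<integral>\<^sup>+\<omega>. hs_sq s (sol_u2 A \<beta> v1 v2 t \<omega>) ^ k \<partial>M) < \<infinity>)))"
  using sol_u1_moment_bound[OF assms(1-4,6,7)] sol_u2_moment_bound[OF assms(1,3,4,6,7)] by blast

end
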